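(* Let $k=\mathbb{F}_q$ with $q$ a power of $2$. Every non-singular quartic plane curve $C\subseteq\mathbb{P}^2$ defined over $k$ with exactly one bitangent is $k$-isomorphic to a curve $C_Q: Q(x,y,z)^2=x(y^3+x^2z)$, where $Q=ax^2+by^2+cz^2+dxy+eyz+fzx$ has coefficients in $k$ and $c\neq0$.
   Context: Bitangents are lines in $\mathbb{P}^2$ (over $\overline{k}$) that are tangent to $C$ at two points or have contact of order 4. In characteristic 2 a non-singular plane quartic has 7, 4, 2 or 1 bitangents. *)

theory Defs
  imports "HOL-Algebra.Algebraic_Closure_Type" "HOL-Computational_Algebra.Polynomial"
begin

text \<open>A ternary form of degree d is given by its coefficient function c:
  c i j is the coefficient of x^i y^j z^(d-i-j) (only i+j \<le> d is relevant).\<close>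

definition tform_eval :: "nat \<Rightarrow> (nat \<Rightarrow> nat \<Rightarrow> 'a::comm_semiring_1) \<Rightarrow> 'a \<Rightarrow> 'a \<Rightarrow> 'a \<Rightarrow> 'a" where
  "tform_eval d c x y z = (\<Sum>i\<le>d. \<Sum>j\<le>d-i. c i j * x ^ i * y ^ j * z ^ (d - i - j))"

definition dX :: "nat \<Rightarrow> (nat \<Rightarrow> nat \<Rightarrow> 'a::comm_semiring_1) \<Rightarrow> nat \<Rightarrow> nat \<Rightarrow> 'a" where
  "dX d c i j = of_nat (Suc i) * c (Suc i) j"
definition dY :: "nat \<Rightarrow> (nat \<Rightarrow> nat \<Rightarrow> 'a::comm_semiring_1) \<Rightarrow> nat \<Rightarrow> nat \<Rightarrow> 'a" where
  "dY d c i j = of_nat (Suc j) * c i (Suc j)"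
definition dZ :: "nat \<Rightarrow> (nat \<Rightarrow> nat \<Rightarrow> 'a::comm_semiring_1) \<Rightarrow> nat \<Rightarrow> nat \<Rightarrow> 'a" where
  "dZ d c i j = of_nat (d - i - j) * c i j"

definition ac_form :: "(nat \<Rightarrow> nat \<Rightarrow> 'k::field) \<Rightarrow> nat \<Rightarrow> nat \<Rightarrow> 'k alg_closure" where
  "ac_form c i j = to_ac (c i j)"

definition nonsingular_quartic :: "(nat \<Rightarrow> nat \<Rightarrow> 'k::field) \<Rightarrow> bool" where
  "nonsingular_quartic c \<longleftrightarrow>
     (\<exists>i j. i + j \<le> 4 \<and> c i j \<noteq> 0) \<and>
     \<not> (\<exists>x y z :: 'k alg_closure. (x, y, z) \<noteq> (0, 0, 0) \<and>
          tform_eval 4 (ac_form c) x y z = 0 \<and>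
          tform_eval 3 (dX 4 (ac_form c)) x y z = 0 \<and>
          tform_eval 3 (dY 4 (ac_form c)) x y z = 0 \<and>
          tform_eval 3 (dZ 4 (ac_form c)) x y z = 0)"

text \<open>Points and lines of P^2 are represented by nonzero triples (homogeneous coordinates).\<close>
definition on_line :: "'a::comm_ring_1 \<times> 'a \<times> 'a \<Rightarrow> 'a \<times> 'a \<times> 'a \<Rightarrow> bool" where
  "on_line l P \<longleftrightarrow> (case l of (l1, l2, l3) \<Rightarrow> case P of (p1, p2, p3) \<Rightarrow> l1 * p1 + l2 * p2 + l3 * p3 = 0)"

text \<open>Two triples are linearly independent (distinct projective points): cross product nonzero.\<close>
definition indep3 :: "'a::comm_ring_1 \<times> 'a \<times> 'a \<Rightarrow> 'a \<times> 'a \<times> 'a \<Rightarrow> bool" where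
  "indep3 P R \<longleftrightarrow> (case P of (p1, p2, p3) \<Rightarrow> case R of (r1, r2, r3) \<Rightarrow>
      (p2 * r3 - p3 * r2, p3 * r1 - p1 * r3, p1 * r2 - p2 * r1) \<noteq> (0, 0, 0))"

text \<open>Restriction of the quartic (over the algebraic closure) to the line through P and R,
  parametrised as t \<mapsto> P + t R: a univariate polynomial in t.\<close>
definition restrict_line :: "(nat \<Rightarrow> nat \<Rightarrow> 'k::field) \<Rightarrow> 'k alg_closure \<times> 'k alg_closure \<times> 'k alg_closure
     \<Rightarrow> 'k alg_closure \<times> 'k alg_closure \<times> 'k alg_closure \<Rightarrow> 'k alg_closure poly" where
  "restrict_line c P R = (case P of (p1, p2, p3) \<Rightarrow> case R of (r1, r2, r3) \<Rightarrow>
      tform_eval 4 (\<lambda>i j. [:ac_form c i j:]) [:p1, r1:] [:p2, r2:] [:p3, r3:])"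

text \<open>The line l meets the curve at the point P with contact order (intersection
  multiplicity) at least m; the line is required not to be contained in the curve.\<close>
definition contact_ge :: "(nat \<Rightarrow> nat \<Rightarrow> 'k::field) \<Rightarrow> 'k alg_closure \<times> 'k alg_closure \<times> 'k alg_closure
     \<Rightarrow> 'k alg_closure \<times> 'k alg_closure \<times> 'k alg_closure \<Rightarrow> nat \<Rightarrow> bool" where
  "contact_ge c l P m \<longleftrightarrow> on_line l P \<and>
     (\<exists>R. on_line l R \<and> indep3 P R \<and> restrict_line c P R \<noteq> 0 \<and> order 0 (restrict_line c P R) \<ge> m)"

definition bitangent :: "(nat \<Rightarrow> nat \<Rightarrow> 'k::field) \<Rightarrow> 'k alg_closure \<times> 'k alg_closure \<times> 'k alg_closure \<Rightarrow> bool" where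
  "bitangent c l \<longleftrightarrow> l \<noteq> (0, 0, 0) \<and>
     ((\<exists>P Q. contact_ge c l P 2 \<and> contact_ge c l Q 2 \<and> indep3 P Q) \<or>
      (\<exists>P. P \<noteq> (0, 0, 0) \<and> contact_ge c l P 4))"

text \<open>The curve has exactly one bitangent (lines counted as projective points of the dual plane).\<close>
definition exactly_one_bitangent :: "(nat \<Rightarrow> nat \<Rightarrow> 'k::field) \<Rightarrow> bool" where
  "exactly_one_bitangent c \<longleftrightarrow>
     (\<exists>l. bitangent c l \<and> (\<forall>l'. bitangent c l' \<longrightarrow> (\<exists>\<mu>. l' = (\<mu> * fst l, \<mu> * fst (snd l), \<mu> * snd (snd l)))))"

definition det3 :: "(nat \<Rightarrow> nat \<Rightarrow> 'a::comm_ring_1) \<Rightarrow> 'a" where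
  "det3 M = M 0 0 * (M 1 1 * M 2 2 - M 1 2 * M 2 1)
          - M 0 1 * (M 1 0 * M 2 2 - M 1 2 * M 2 0)
          + M 0 2 * (M 1 0 * M 2 1 - M 1 1 * M 2 0)"

text \<open>k-isomorphism of plane quartics: a projective linear change of coordinates over k
  carrying one defining form to a nonzero k-multiple of the other (identity of forms,
  tested on all points over the (infinite) algebraic closure).  G is the other defining
  form, given as a function on the algebraic closure.\<close>
definition k_isomorphic :: "(nat \<Rightarrow> nat \<Rightarrow> 'k::field)
     \<Rightarrow> ('k alg_closure \<Rightarrow> 'k alg_closure \<Rightarrow> 'k alg_closure \<Rightarrow> 'k alg_closure) \<Rightarrow> bool" where
  "k_isomorphic c G \<longleftrightarrow> (\<exists>(M :: nat \<Rightarrow> nat \<Rightarrow> 'k) (s :: 'k). det3 M \<noteq> 0 \<and> s \<noteq> 0 \<and>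
     (\<forall>x y z :: 'k alg_closure.
        tform_eval 4 (ac_form c)
          (to_ac (M 0 0) * x + to_ac (M 0 1) * y + to_ac (M 0 2) * z)
          (to_ac (M 1 0) * x + to_ac (M 1 1) * y + to_ac (M 1 2) * z)
          (to_ac (M 2 0) * x + to_ac (M 2 1) * y + to_ac (M 2 2) * z)
        = to_ac s * G x y z))"

definition CQ_form :: "'k::field \<Rightarrow> 'k \<Rightarrow> 'k \<Rightarrow> 'k \<Rightarrow> 'k \<Rightarrow> 'k
     \<Rightarrow> 'k alg_closure \<Rightarrow> 'k alg_closure \<Rightarrow> 'k alg_closure \<Rightarrow> 'k alg_closure" where
  "CQ_form a b c d e f x y z =
     (to_ac a * x^2 + to_ac b * y^2 + to_ac c * z^2 + to_ac d * x * y + to_ac e * y * z + to_ac f * z * x)^2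
     - x * (y^3 + x^2 * z)"

end

theory Submission
  imports Defs
begin

text \<open>
  Over the algebraic closure, the \<open>q\<close>-power Frobenius permutes the bitangents, so the unique
  bitangent is defined over \<open>k\<close> and a change of coordinates over \<open>k\<close> makes it the line
  \<open>x = 0\<close>. In characteristic two, a line on which the restriction of the quartic has vanishing
  odd coefficients is a bitangent, because the restriction is then a square (it is nonzero, as a
  nonsingular quartic contains no line). Tangency along \<open>x = 0\<close> kills the monomials \<open>y z\<^sup>3\<close>
  and \<open>y\<^sup>3 z\<close>, so the quartic is \<open>S\<^sup>2 + x R\<close> with \<open>S\<close> a quadratic form over \<open>k\<close> (every element
  of \<open>k\<close> is a square) and \<open>R\<close> a cubic. Asking that no line \<open>t x + \<mu> y + z = 0\<close> or
  \<open>t x + y = 0\<close> be a further bitangent forces \<open>R = s (M\<^sup>3 + x\<^sup>2 L)\<close> for independent linear forms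
  \<open>L, M\<close> in \<open>y, z\<close> over \<open>k\<close>. In the coordinates \<open>(x, M, L)\<close> the quartic becomes
  \<open>s (Q\<^sup>2 + x (y\<^sup>3 + x\<^sup>2 z))\<close>, which defines \<open>C_Q\<close> since \<open>-1 = 1\<close>. Finally \<open>c \<noteq> 0\<close>, since
  otherwise \<open>(0 : 0 : 1)\<close> is a singular point.
\<close>

lemma char2_numeral_Bit0:
  assumes "(2::'a::comm_ring_1) = 0" shows "(numeral (Num.Bit0 n) :: 'a) = 0"
  by (metis assms mult_2 mult_zero_left numeral_Bit0)

lemma char2_numeral_Bit1:
  assumes "(2::'a::comm_ring_1) = 0" shows "(numeral (Num.Bit1 n) :: 'a) = 1"
  by (metis char2_numeral_Bit0[OF assms] numeral_Bit0 numeral_Bit1 add_0)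

lemmas char2_numeral = char2_numeral_Bit0 char2_numeral_Bit1

lemma two_eq_zero_if_CHAR_2:
  assumes "CHAR('a::comm_ring_1) = 2" shows "(2::'a) = 0"
  by (metis assms of_nat_CHAR of_nat_numeral)

lemma two_eq_zero_alg_closure:
  assumes "CHAR('k::field) = 2" shows "(2::'k alg_closure) = 0"
  by (rule two_eq_zero_if_CHAR_2) (simp add: assms)

lemma char2_add_self:
  assumes "(2::'a::comm_ring_1) = 0" shows "x + x = (0::'a)"
  by (metis assms mult_2 mult_zero_left)

lemma char2_uminus:
  assumes "(2::'a::comm_ring_1) = 0" shows "- x = (x::'a)"
  using char2_add_self[OF assms, of x] by (simp add: add_eq_0_iff2)

section \<open>Ternary forms and their restrictions to lines\<close>

lemma tform_eval_4: "tform_eval 4 c x y z =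
  c 0 0 * z^4 + c 0 1 * y * z^3 + c 0 2 * y^2 * z^2 + c 0 3 * y^3 * z + c 0 4 * y^4
 + c 1 0 * x * z^3 + c 1 1 * x * y * z^2 + c 1 2 * x * y^2 * z + c 1 3 * x * y^3
 + c 2 0 * x^2 * z^2 + c 2 1 * x^2 * y * z + c 2 2 * x^2 * y^2
 + c 3 0 * x^3 * z + c 3 1 * x^3 * y + c 4 0 * x^4"
  by (simp add: tform_eval_def numeral_eq_Suc atMost_Suc algebra_simps)

lemma tform_eval_3: "tform_eval 3 c x y z =
  c 0 0 * z^3 + c 0 1 * y * z^2 + c 0 2 * y^2 * z + c 0 3 * y^3
 + c 1 0 * x * z^2 + c 1 1 * x * y * z + c 1 2 * x * y^2
 + c 2 0 * x^2 * z + c 2 1 * x^2 * y + c 3 0 * x^3"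
  by (simp add: tform_eval_def numeral_eq_Suc atMost_Suc algebra_simps)

lemma tform_eval_homogeneous: "tform_eval d c (s * x) (s * y) (s * z) = s ^ d * tform_eval d c x y z"
  unfolding tform_eval_def sum_distrib_left
proof (intro sum.cong refl)
  fix i j assume "i \<in> {..d}" "j \<in> {..d - i}"
  hence "i + j + (d - i - j) = d" by auto
  hence "s ^ d = s ^ i * s ^ j * s ^ (d - i - j)" by (metis power_add)
  thus "c i j * (s * x) ^ i * (s * y) ^ j * (s * z) ^ (d - i - j) =
        s ^ d * (c i j * x ^ i * y ^ j * z ^ (d - i - j))"
    by (simp add: power_mult_distrib mult_ac)
qed

lemma infinite_UNIV_alg_closed_field: "infinite (UNIV :: 'a::alg_closed_field set)"
proof
  assume fin: "finite (UNIV :: 'a set)"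
  define p :: "'a poly" where "p = (\<Prod>a\<in>UNIV. [:-a, 1:]) + 1"
  have "degree (\<Prod>a\<in>(UNIV :: 'a set). [:-a, 1:]) = card (UNIV :: 'a set)"
    by (simp add: degree_prod_sum_eq)
  moreover have "card (UNIV :: 'a set) > 0" using fin by (simp add: finite_UNIV_card_ge_0)
  ultimately have "degree p > 0" unfolding p_def
    by (metis add.commute add_0 degree_add_eq_right degree_1)
  then obtain x where "poly p x = 0" using alg_closed_imp_poly_has_root by blast
  moreover have "poly (\<Prod>a\<in>UNIV. [:-a, 1:]) x = 0"
    using fin by (auto simp: poly_prod prod_zero_iff)
  ultimately show False by (simp add: p_def)
qed

lemma poly_eqI_infinite:
  fixes p q :: "'a::idom poly"
  assumes "infinite S" "\<And>t. t \<in> S \<Longrightarrow> poly p t = poly q t"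
  shows "p = q"
proof (rule ccontr)
  assume "p \<noteq> q"
  hence "finite {t. poly (p - q) t = 0}" by (intro poly_roots_finite) simp
  moreover have "S \<subseteq> {t. poly (p - q) t = 0}" using assms(2) by auto
  ultimately show False using assms(1) finite_subset by blast
qed

lemma poly_eqI_alg_closed:
  fixes p q :: "'a::alg_closed_field poly"
  assumes "\<And>t. poly p t = poly q t" shows "p = q"
  by (rule poly_eqI_infinite[OF infinite_UNIV_alg_closed_field]) (use assms in auto)

lemma poly_eqI_alg_closed_nonzero:
  fixes p q :: "'a::alg_closed_field poly"
  assumes "\<And>t. t \<noteq> 0 \<Longrightarrow> poly p t = poly q t" shows "p = q"
proof (rule poly_eqI_infinite[of "UNIV - {0}"])
  show "infinite (UNIV - {0::'a})" using infinite_UNIV_alg_closed_field by simp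
qed (use assms in auto)

lemma poly_eq_sum_coeff:
  fixes p :: "'a::comm_ring_1 poly"
  assumes "degree p \<le> d" shows "poly p t = (\<Sum>i\<le>d. coeff p i * t ^ i)"
  unfolding poly_altdef by (rule sum.mono_neutral_left) (use assms in \<open>auto simp: coeff_eq_0\<close>)

lemma order_0_ge_iff: "p \<noteq> 0 \<Longrightarrow> m \<le> order 0 p \<longleftrightarrow> (\<forall>k<m. coeff p k = 0)"
  using monom_1_dvd_iff monom_1_dvd_iff' by blast

definition form_at :: "nat \<Rightarrow> (nat \<Rightarrow> nat \<Rightarrow> 'a::comm_ring_1) \<Rightarrow> 'a \<times> 'a \<times> 'a \<Rightarrow> 'a" where
  "form_at d c P = (case P of (x, y, z) \<Rightarrow> tform_eval d c x y z)"

definition add_scaled :: "'a::comm_ring_1 \<times> 'a \<times> 'a \<Rightarrow> 'a \<Rightarrow> 'a \<times> 'a \<times> 'a \<Rightarrow> 'a \<times> 'a \<times> 'a" where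
  "add_scaled P t R = (case P of (p1, p2, p3) \<Rightarrow> case R of (r1, r2, r3) \<Rightarrow>
     (p1 + t * r1, p2 + t * r2, p3 + t * r3))"

definition restrict_form :: "nat \<Rightarrow> (nat \<Rightarrow> nat \<Rightarrow> 'a::comm_ring_1) \<Rightarrow> 'a \<times> 'a \<times> 'a \<Rightarrow> 'a \<times> 'a \<times> 'a \<Rightarrow> 'a poly" where
  "restrict_form d c P R = (case P of (p1, p2, p3) \<Rightarrow> case R of (r1, r2, r3) \<Rightarrow>
      tform_eval d (\<lambda>i j. [:c i j:]) [:p1, r1:] [:p2, r2:] [:p3, r3:])"

definition dot3 :: "'a::comm_ring_1 \<times> 'a \<times> 'a \<Rightarrow> 'a \<times> 'a \<times> 'a \<Rightarrow> 'a" where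
  "dot3 l P = (case l of (l1, l2, l3) \<Rightarrow> case P of (p1, p2, p3) \<Rightarrow> l1 * p1 + l2 * p2 + l3 * p3)"

definition gradient :: "(nat \<Rightarrow> nat \<Rightarrow> 'a::comm_ring_1) \<Rightarrow> 'a \<times> 'a \<times> 'a \<Rightarrow> 'a \<times> 'a \<times> 'a" where
  "gradient c P = (case P of (x, y, z) \<Rightarrow>
     (tform_eval 3 (dX 4 c) x y z, tform_eval 3 (dY 4 c) x y z, tform_eval 3 (dZ 4 c) x y z))"

definition polar :: "(nat \<Rightarrow> nat \<Rightarrow> 'a::comm_ring_1) \<Rightarrow> 'a \<times> 'a \<times> 'a \<Rightarrow> 'a \<times> 'a \<times> 'a \<Rightarrow> 'a" where
  "polar c P R = dot3 R (gradient c P)"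

lemma restrict_line_eq_restrict_form: "restrict_line F P R = restrict_form 4 (ac_form F) P R"
  by (simp add: restrict_line_def restrict_form_def ac_form_def split: prod.splits)

lemma poly_tform_eval:
  "poly (tform_eval d (\<lambda>i j. [:c i j:]) A B C) t = tform_eval d c (poly A t) (poly B t) (poly C t)"
  by (simp add: tform_eval_def poly_sum mult.assoc)

lemma poly_restrict_form: "poly (restrict_form d c P R) t = form_at d c (add_scaled P t R)"
  by (simp add: restrict_form_def form_at_def add_scaled_def poly_tform_eval algebra_simps
      split: prod.splits)

lemma degree_tform_eval_linear:
  assumes "degree A \<le> 1" "degree B \<le> 1" "degree C \<le> 1"
  shows "degree (tform_eval d (\<lambda>i j. [:c i j:]) A B C) \<le> d"
proof -
  have "degree ([:c i j:] * A ^ i * B ^ j * C ^ (d - i - j)) \<le> d" if "i \<le> d" "j \<le> d - i" for i j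
  proof -
    have "degree ([:c i j:] * A ^ i * B ^ j * C ^ (d - i - j)) \<le> 0 + i + j + (d - i - j)"
      by (intro degree_mult_le[THEN order_trans] add_mono degree_power_le[THEN order_trans])
         (use assms in auto)
    thus ?thesis using that by simp
  qed
  thus ?thesis unfolding tform_eval_def
    by (intro degree_sum_le) (auto simp del: pCons_0_0 mult_pCons_left)
qed

lemma degree_restrict_form: "degree (restrict_form d c P R) \<le> d"
  by (auto simp: restrict_form_def split: prod.splits intro!: degree_tform_eval_linear)

text \<open>By homogeneity \<open>c(R + s P) = s\<^sup>d c(P + s\<^sup>-\<^sup>1 R)\<close>, so swapping \<open>P\<close> and \<open>R\<close> reverses the
  coefficients.\<close>

lemma restrict_form_swap_coeff:
  fixes c :: "nat \<Rightarrow> nat \<Rightarrow> 'a::alg_closed_field"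
  assumes "k \<le> d"
  shows "coeff (restrict_form d c R P) k = coeff (restrict_form d c P R) (d - k)"
proof -
  define p where "p = restrict_form d c P R"
  define p' where "p' = (\<Sum>i\<le>d. monom (coeff p i) (d - i))"
  have "restrict_form d c R P = p'"
  proof (rule poly_eqI_alg_closed_nonzero)
    fix s :: 'a assume s: "s \<noteq> 0"
    obtain p1 p2 p3 where P: "P = (p1, p2, p3)" by (cases P)
    obtain r1 r2 r3 where R: "R = (r1, r2, r3)" by (cases R)
    have "poly (restrict_form d c R P) s = tform_eval d c (r1 + s * p1) (r2 + s * p2) (r3 + s * p3)"
      by (simp add: poly_restrict_form form_at_def add_scaled_def P R)
    also have "\<dots> = tform_eval d c (s * (p1 + inverse s * r1)) (s * (p2 + inverse s * r2))
                      (s * (p3 + inverse s * r3))"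
      using s by (simp add: algebra_simps)
    also have "\<dots> = s ^ d * poly p (inverse s)"
      by (simp add: tform_eval_homogeneous p_def poly_restrict_form form_at_def add_scaled_def P R)
    also have "\<dots> = (\<Sum>i\<le>d. coeff p i * s ^ (d - i))"
      unfolding poly_eq_sum_coeff[OF degree_restrict_form[of d c P R, folded p_def]] sum_distrib_left
    proof (intro sum.cong refl)
      fix i assume "i \<in> {..d}"
      hence "s ^ d = s ^ (d - i) * s ^ i" by (simp flip: power_add)
      thus "s ^ d * (coeff p i * inverse s ^ i) = coeff p i * s ^ (d - i)"
        using s by (simp add: power_inverse field_simps)
    qed
    also have "\<dots> = poly p' s" by (simp add: p'_def poly_sum poly_monom)
    finally show "poly (restrict_form d c R P) s = poly p' s" .
  qed
  hence "coeff (restrict_form d c R P) k = (\<Sum>i\<le>d. if d - i = k then coeff p i else 0)"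
    by (simp add: p'_def coeff_sum coeff_monom)
  also have "\<dots> = (\<Sum>i\<in>{d - k}. coeff p i)"
    by (rule sum.mono_neutral_cong_right) (use assms in auto)
  finally show ?thesis by (simp add: p_def)
qed

lemma coeff_0_restrict_form: "coeff (restrict_form d c P R) 0 = form_at d c P"
  by (simp add: poly_0_coeff_0[symmetric] poly_restrict_form add_scaled_def split: prod.splits)

lemma coeff_top_restrict_form:
  fixes c :: "nat \<Rightarrow> nat \<Rightarrow> 'a::alg_closed_field"
  shows "coeff (restrict_form d c P R) d = form_at d c R"
  using restrict_form_swap_coeff[of 0 d c R P] coeff_0_restrict_form[of d c R P] by simp

lemma coeff_1_eq_poly_pderiv: "coeff p 1 = poly (pderiv p) 0"
  by (simp add: poly_0_coeff_0 coeff_pderiv)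

lemma coeff_1_restrict_form: "coeff (restrict_form 4 c P R) 1 = polar c P R"
proof -
  obtain p1 p2 p3 where P: "P = (p1, p2, p3)" by (cases P)
  obtain r1 r2 r3 where R: "R = (r1, r2, r3)" by (cases R)
  show ?thesis unfolding P R restrict_form_def polar_def dot3_def gradient_def prod.case
      coeff_1_eq_poly_pderiv tform_eval_4 tform_eval_3 dX_def dY_def dZ_def
    by (simp add: pderiv_mult pderiv_power pderiv_add pderiv_pCons algebra_simps
        power2_eq_square power3_eq_cube numeral_eq_Suc)
qed

lemma coeff_3_restrict_form:
  fixes c :: "nat \<Rightarrow> nat \<Rightarrow> 'a::alg_closed_field"
  shows "coeff (restrict_form 4 c P R) 3 = polar c R P"
  using restrict_form_swap_coeff[of 1 4 c R P] coeff_1_restrict_form[of c R P] by simp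

lemma restrict_form_add_scaled:
  fixes c :: "nat \<Rightarrow> nat \<Rightarrow> 'a::alg_closed_field"
  shows "restrict_form d c (add_scaled P r R) R = pcompose (restrict_form d c P R) [:r, 1:]"
proof (rule poly_eqI_alg_closed)
  fix t
  have "add_scaled (add_scaled P r R) t R = add_scaled P (r + t) R"
    by (auto simp: add_scaled_def split: prod.splits) (simp_all add: algebra_simps)
  thus "poly (restrict_form d c (add_scaled P r R) R) t = poly (pcompose (restrict_form d c P R) [:r, 1:]) t"
    by (simp add: poly_restrict_form poly_pcompose)
qed


section \<open>Contact and bitangents over an algebraically closed field\<close>

definition has_contact :: "(nat \<Rightarrow> nat \<Rightarrow> 'a::alg_closed_field) \<Rightarrow> 'a \<times> 'a \<times> 'a \<Rightarrow> 'a \<times> 'a \<times> 'a \<Rightarrow> nat \<Rightarrow> bool" where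
  "has_contact c l P m \<longleftrightarrow> on_line l P \<and>
     (\<exists>R. on_line l R \<and> indep3 P R \<and> restrict_form 4 c P R \<noteq> 0 \<and> order 0 (restrict_form 4 c P R) \<ge> m)"

definition is_bitangent :: "(nat \<Rightarrow> nat \<Rightarrow> 'a::alg_closed_field) \<Rightarrow> 'a \<times> 'a \<times> 'a \<Rightarrow> bool" where
  "is_bitangent c l \<longleftrightarrow> l \<noteq> (0, 0, 0) \<and>
     ((\<exists>P Q. has_contact c l P 2 \<and> has_contact c l Q 2 \<and> indep3 P Q) \<or>
      (\<exists>P. P \<noteq> (0, 0, 0) \<and> has_contact c l P 4))"

definition scale3 :: "'a::comm_ring_1 \<Rightarrow> 'a \<times> 'a \<times> 'a \<Rightarrow> 'a \<times> 'a \<times> 'a" where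
  "scale3 \<mu> l = (\<mu> * fst l, \<mu> * fst (snd l), \<mu> * snd (snd l))"

definition unique_bitangent :: "(nat \<Rightarrow> nat \<Rightarrow> 'a::alg_closed_field) \<Rightarrow> 'a \<times> 'a \<times> 'a \<Rightarrow> bool" where
  "unique_bitangent c l \<longleftrightarrow> is_bitangent c l \<and> (\<forall>l'. is_bitangent c l' \<longrightarrow> (\<exists>\<mu>. l' = scale3 \<mu> l))"

lemma bitangent_iff_is_bitangent: "bitangent F l \<longleftrightarrow> is_bitangent (ac_form F) l"
  by (simp add: bitangent_def is_bitangent_def contact_ge_def has_contact_def
      restrict_line_eq_restrict_form)

lemma exactly_one_bitangent_iff: "exactly_one_bitangent F \<longleftrightarrow> (\<exists>l. unique_bitangent (ac_form F) l)"
  by (simp add: exactly_one_bitangent_def unique_bitangent_def bitangent_iff_is_bitangent scale3_def)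

lemma is_bitangent_nonzero: "is_bitangent c l \<Longrightarrow> l \<noteq> (0, 0, 0)"
  by (simp add: is_bitangent_def)

lemma is_bitangent_map:
  assumes B: "is_bitangent c l" and "l' \<noteq> (0, 0, 0)"
    and indep3: "\<And>P Q. indep3 P Q \<Longrightarrow> indep3 (f P) (f Q)"
    and nonzero: "\<And>P. P \<noteq> (0, 0, 0) \<Longrightarrow> f P \<noteq> (0, 0, 0)"
    and contact: "\<And>P m. has_contact c l P m \<Longrightarrow> has_contact c' l' (f P) m"
  shows "is_bitangent c' l'"
proof -
  from B consider (two_points) P Q where "has_contact c l P 2" "has_contact c l Q 2" "indep3 P Q"
    | (one_point) P where "P \<noteq> (0, 0, 0)" "has_contact c l P 4" unfolding is_bitangent_def by blast
  thus ?thesis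
  proof cases
    case two_points
    hence "has_contact c' l' (f P) 2" "has_contact c' l' (f Q) 2" "indep3 (f P) (f Q)"
      using contact indep3 by blast+
    thus ?thesis unfolding is_bitangent_def using \<open>l' \<noteq> (0, 0, 0)\<close> by blast
  next
    case one_point
    hence "has_contact c' l' (f P) 4" "f P \<noteq> (0, 0, 0)" using contact nonzero by blast+
    thus ?thesis unfolding is_bitangent_def using \<open>l' \<noteq> (0, 0, 0)\<close> by blast
  qed
qed

lemma on_line_add_scaled:
  assumes "on_line l P" "on_line l R" shows "on_line l (add_scaled P t R)"
proof -
  obtain l1 l2 l3 where L: "l = (l1, l2, l3)" by (cases l)
  obtain p1 p2 p3 where P: "P = (p1, p2, p3)" by (cases P)
  obtain r1 r2 r3 where R: "R = (r1, r2, r3)" by (cases R)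
  have "l1 * (p1 + t * r1) + l2 * (p2 + t * r2) + l3 * (p3 + t * r3) =
        (l1 * p1 + l2 * p2 + l3 * p3) + t * (l1 * r1 + l2 * r2 + l3 * r3)"
    by (simp add: algebra_simps)
  thus ?thesis using assms by (simp add: L P R on_line_def add_scaled_def)
qed

lemma indep3_add_scaled_left: "indep3 (add_scaled P t R) R \<longleftrightarrow> indep3 P R"
  by (auto simp: indep3_def add_scaled_def split: prod.splits) (auto simp: algebra_simps)

lemma indep3_commute: "indep3 P R \<Longrightarrow> indep3 R P"
  by (auto simp: indep3_def split: prod.splits) (auto simp: algebra_simps)

lemma indep3_nonzero: "indep3 P R \<Longrightarrow> P \<noteq> (0, 0, 0)" "indep3 P R \<Longrightarrow> R \<noteq> (0, 0, 0)"
  by (auto simp: indep3_def)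

lemma indep3_add_scaled:
  fixes P R :: "'a::field \<times> 'a \<times> 'a"
  assumes "r \<noteq> s" "indep3 P R" shows "indep3 (add_scaled P r R) (add_scaled P s R)"
proof -
  obtain p1 p2 p3 where P: "P = (p1, p2, p3)" by (cases P)
  obtain r1 r2 r3 where R: "R = (r1, r2, r3)" by (cases R)
  have "(p2 + r * r2) * (p3 + s * r3) - (p3 + r * r3) * (p2 + s * r2) = (s - r) * (p2 * r3 - p3 * r2)"
       "(p3 + r * r3) * (p1 + s * r1) - (p1 + r * r1) * (p3 + s * r3) = (s - r) * (p3 * r1 - p1 * r3)"
       "(p1 + r * r1) * (p2 + s * r2) - (p2 + r * r2) * (p1 + s * r1) = (s - r) * (p1 * r2 - p2 * r1)"
    by (simp_all add: algebra_simps)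
  with assms show ?thesis unfolding P R indep3_def add_scaled_def by (simp only: prod.case) auto
qed

lemma has_contactI:
  fixes c :: "nat \<Rightarrow> nat \<Rightarrow> 'a::alg_closed_field"
  assumes "on_line l Q" "on_line l R" "indep3 Q R" "restrict_form 4 c Q R \<noteq> 0"
    and "monom 1 m dvd restrict_form 4 c Q R"
  shows "has_contact c l Q m"
  using assms monom_1_dvd_iff unfolding has_contact_def by blast

lemma has_contact_root:
  fixes c :: "nat \<Rightarrow> nat \<Rightarrow> 'a::alg_closed_field"
  assumes "on_line l P" "on_line l R" "indep3 P R" "restrict_form 4 c P R \<noteq> 0"
    and "[:-r, 1:] ^ m dvd restrict_form 4 c P R"
  shows "has_contact c l (add_scaled P r R) m"
proof (rule has_contactI[where R = R])
  show "restrict_form 4 c (add_scaled P r R) R \<noteq> 0"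
    using assms(4) by (simp add: restrict_form_add_scaled pcompose_eq_0_iff)
  obtain h where h: "restrict_form 4 c P R = [:-r, 1:] ^ m * h" using assms(5) by (auto elim: dvdE)
  have base: "pcompose [:-r, 1:] [:r, 1:] = [:0, 1:]" by (simp add: pcompose_pCons)
  have "pcompose ([:-r, 1:] ^ k) [:r, 1:] = [:0, 1:] ^ k" for k
    by (induction k) (simp_all only: power_0 power_Suc pcompose_1 pcompose_mult base)
  hence "pcompose ([:-r, 1:] ^ m) [:r, 1:] = monom 1 m" by (simp add: monom_altdef)
  thus "monom 1 m dvd restrict_form 4 c (add_scaled P r R) R"
    by (simp add: restrict_form_add_scaled h pcompose_mult)
qed (use assms in \<open>auto simp: on_line_add_scaled indep3_add_scaled_left\<close>)

lemma char2_square_quadratic: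
  fixes b0 b1 b2 t :: "'a::comm_ring_1"
  assumes "(2::'a) = 0"
  shows "(b0 + b1 * t + b2 * t^2)^2 = b0^2 + b1^2 * t^2 + b2^2 * t^4"
  by (simp add: eval_nat_numeral algebra_simps, simp add: char2_numeral[OF assms] algebra_simps)

lemma char2_square_if_odd_coeffs_vanish:
  fixes p :: "'a::alg_closed_field poly"
  assumes "(2::'a) = 0" "degree p \<le> 4" "coeff p 1 = 0" "coeff p 3 = 0"
  shows "\<exists>b0 b1 b2. p = [:b0, b1, b2:] ^ 2"
proof -
  obtain b0 b1 b2 where "b0 ^ 2 = coeff p 0" "b1 ^ 2 = coeff p 2" "b2 ^ 2 = coeff p 4"
    using nth_root_exists[of 2] by (metis zero_less_numeral)
  moreover have "p = [:b0, b1, b2:] ^ 2" if "b0 ^ 2 = coeff p 0" "b1 ^ 2 = coeff p 2" "b2 ^ 2 = coeff p 4"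
  proof (rule poly_eqI_alg_closed)
    fix t
    have "poly p t = b0^2 + b1^2 * t^2 + b2^2 * t^4"
      using poly_eq_sum_coeff[OF assms(2), of t] assms(3,4) that
      by (simp add: numeral_eq_Suc atMost_Suc)
    also have "\<dots> = (b0 + b1 * t + b2 * t^2)^2" by (rule char2_square_quadratic[OF assms(1), symmetric])
    also have "\<dots> = poly ([:b0, b1, b2:] ^ 2) t" by (simp add: algebra_simps power2_eq_square)
    finally show "poly p t = poly ([:b0, b1, b2:] ^ 2) t" .
  qed
  ultimately show ?thesis by blast
qed

lemma degree_2_poly_factor:
  fixes g :: "'a::alg_closed_field poly"
  assumes "degree g = 2"
  obtains r1 r2 h where "g = [:-r1, 1:] * [:-r2, 1:] * h"
proof -
  obtain r1 where "poly g r1 = 0" using alg_closed_imp_poly_has_root[of g] assms by auto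
  then obtain h where h: "g = [:-r1, 1:] * h" using poly_eq_0_iff_dvd by (metis dvdE)
  have "degree h = 1" using assms h degree_mult_eq[of "[:-r1, 1:]" h] by (cases "h = 0") auto
  then obtain r2 where "poly h r2 = 0" using alg_closed_imp_poly_has_root[of h] by auto
  then obtain h2 where h2: "h = [:-r2, 1:] * h2" using poly_eq_0_iff_dvd by (metis dvdE)
  show ?thesis by (rule that[of r1 r2 h2]) (simp only: h h2 mult.assoc)
qed

text \<open>\<open>R\<close> is the point at infinity of the parametrisation \<open>t \<mapsto> P + t R\<close>, so its contact order is
  read off from the top coefficients of the restriction.\<close>

lemma has_contact_at_infinity:
  fixes c :: "nat \<Rightarrow> nat \<Rightarrow> 'a::alg_closed_field"
  assumes "on_line l P" "on_line l R" "indep3 P R" "m \<le> 4"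
    and "\<forall>k<m. coeff (restrict_form 4 c P R) (4 - k) = 0" "coeff (restrict_form 4 c P R) (4 - m) \<noteq> 0"
  shows "has_contact c l R m"
proof (rule has_contactI[OF assms(2,1) indep3_commute[OF assms(3)]])
  have swap: "coeff (restrict_form 4 c R P) k = coeff (restrict_form 4 c P R) (4 - k)" if "k \<le> 4" for k
    using restrict_form_swap_coeff[OF that] .
  show "restrict_form 4 c R P \<noteq> 0" using assms(4,6) swap[of m] by auto
  show "monom 1 m dvd restrict_form 4 c R P" unfolding monom_1_dvd_iff' using assms(4,5) swap by auto
qed

text \<open>The points of tangency are the roots of the quadratic, possibly including the root
  at infinity \<open>R\<close>.\<close>

lemma is_bitangent_if_restriction_square:
  fixes c :: "nat \<Rightarrow> nat \<Rightarrow> 'a::alg_closed_field"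
  assumes l: "l \<noteq> (0, 0, 0)" "on_line l P" "on_line l R" and ind: "indep3 P R"
    and nz: "restrict_form 4 c P R \<noteq> 0" and pg: "restrict_form 4 c P R = [:b0, b1, b2:] ^ 2"
  shows "is_bitangent c l"
proof -
  have contact_root: "has_contact c l (add_scaled P r R) m" if "[:-r, 1:] ^ m dvd restrict_form 4 c P R" for r m
    using has_contact_root[OF l(2,3) ind nz] that .
  have contact_R: "has_contact c l R m"
    if "\<forall>k<m. coeff (restrict_form 4 c P R) (4 - k) = 0" "coeff (restrict_form 4 c P R) (4 - m) \<noteq> 0" "m \<le> 4" for m
    using has_contact_at_infinity[OF l(2,3) ind] that by blast
  show ?thesis
  proof (cases "b2 = 0")
    case False
    hence "degree [:b0, b1, b2:] = 2" by simp
    then obtain r1 r2 h where g: "[:b0, b1, b2:] = [:-r1, 1:] * [:-r2, 1:] * h" by (rule degree_2_poly_factor)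
    have pf: "restrict_form 4 c P R = [:-r1, 1:]^2 * [:-r2, 1:]^2 * h^2"
      unfolding pg g power_mult_distrib ..
    show ?thesis
    proof (cases "r1 = r2")
      case True
      have "[:-r1, 1:]^4 dvd restrict_form 4 c P R" using pf True by (simp add: power_add[symmetric] mult.assoc)
      moreover have "add_scaled P r1 R \<noteq> (0, 0, 0)"
        using ind indep3_add_scaled_left indep3_nonzero by blast
      ultimately show ?thesis unfolding is_bitangent_def using l contact_root by blast
    next
      case False
      have "[:-r1, 1:]^2 dvd restrict_form 4 c P R" "[:-r2, 1:]^2 dvd restrict_form 4 c P R"
        unfolding pf by (simp_all add: mult.assoc mult.left_commute[of "[:-r1, 1:]^2"])
      thus ?thesis unfolding is_bitangent_def
        using l contact_root indep3_add_scaled[OF False ind] by blast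
    qed
  next
    case b2: True
    show ?thesis
    proof (cases "b1 = 0")
      case False
      have "restrict_form 4 c P R = smult (b1^2) ([:-(- b0 / b1), 1:]^2)"
        using pg False b2 by (simp add: smult_power[symmetric])
      hence "has_contact c l (add_scaled P (- b0 / b1) R) 2" by (intro contact_root) (simp add: dvd_smult)
      moreover have "has_contact c l R 2"
        by (rule contact_R) (use pg b2 False in \<open>auto simp: less_Suc_eq power2_eq_square numeral_eq_Suc\<close>)
      ultimately show ?thesis
        unfolding is_bitangent_def using l indep3_add_scaled_left ind by blast
    next
      case True
      have "has_contact c l R 4"
        by (rule contact_R) (use pg b2 True nz in \<open>auto simp: less_Suc_eq numeral_eq_Suc power2_eq_square\<close>)
      thus ?thesis unfolding is_bitangent_def using l ind indep3_nonzero by blast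
    qed
  qed
qed

lemma is_bitangentI_char2:
  fixes c :: "nat \<Rightarrow> nat \<Rightarrow> 'a::alg_closed_field"
  assumes two: "(2::'a) = 0" and l: "l \<noteq> (0, 0, 0)" "on_line l P" "on_line l R"
    and ind: "indep3 P R" and nz: "restrict_form 4 c P R \<noteq> 0"
    and "polar c P R = 0" and "polar c R P = 0"
  shows "is_bitangent c l"
proof -
  have "\<exists>b0 b1 b2. restrict_form 4 c P R = [:b0, b1, b2:] ^ 2"
    by (rule char2_square_if_odd_coeffs_vanish[OF two])
       (simp_all only: degree_restrict_form coeff_1_restrict_form coeff_3_restrict_form assms)
  thus ?thesis using is_bitangent_if_restriction_square[OF l ind nz] by blast
qed

section \<open>Nonsingular quartics contain no line\<close>

definition no_singular_point :: "(nat \<Rightarrow> nat \<Rightarrow> 'a::comm_ring_1) \<Rightarrow> bool" where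
  "no_singular_point c \<longleftrightarrow>
     (\<forall>P. P \<noteq> (0, 0, 0) \<longrightarrow> form_at 4 c P = 0 \<longrightarrow> gradient c P \<noteq> (0, 0, 0))"

lemma nonsingular_quartic_imp_no_singular_point:
  "nonsingular_quartic F \<Longrightarrow> no_singular_point (ac_form F)"
  by (force simp: nonsingular_quartic_def no_singular_point_def form_at_def gradient_def)

lemma on_line_iff_dot3: "on_line l P \<longleftrightarrow> dot3 l P = 0"
  by (simp add: on_line_def dot3_def split: prod.splits)

lemma cramer2_eq_0:
  fixes a b c d x y :: "'a::field"
  assumes "a * d - b * c \<noteq> 0" "a * x + b * y = 0" "c * x + d * y = 0"
  shows "x = 0 \<and> y = 0"
proof -
  have "(a * d - b * c) * x = d * (a * x + b * y) - b * (c * x + d * y)"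
       "(a * d - b * c) * y = a * (c * x + d * y) - c * (a * x + b * y)"
    by (simp_all add: algebra_simps)
  thus ?thesis using assms by simp
qed

lemma indep3_unit_vector_completion:
  fixes P R :: "'a::field \<times> 'a \<times> 'a"
  assumes "indep3 P R"
  obtains D where "\<And>G. dot3 P G = 0 \<Longrightarrow> dot3 R G = 0 \<Longrightarrow> dot3 D G = 0 \<Longrightarrow> G = (0, 0, 0)"
proof -
  obtain p1 p2 p3 r1 r2 r3 where P: "P = (p1, p2, p3)" and R: "R = (r1, r2, r3)"
    by (cases P, cases R)
  consider "p2 * r3 - p3 * r2 \<noteq> 0" | "p3 * r1 - p1 * r3 \<noteq> 0" | "p1 * r2 - p2 * r1 \<noteq> 0"
    using assms by (auto simp: indep3_def P R)
  thus ?thesis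
  proof cases
    case 1
    show ?thesis by (rule that[of "(1, 0, 0)"], clarsimp simp: dot3_def P R) (use cramer2_eq_0[OF 1] in blast)
  next
    case 2
    hence det: "p1 * r3 - p3 * r1 \<noteq> 0" by (metis minus_diff_eq neg_equal_0_iff_equal)
    show ?thesis by (rule that[of "(0, 1, 0)"], clarsimp simp: dot3_def P R) (use cramer2_eq_0[OF det] in blast)
  next
    case 3
    show ?thesis by (rule that[of "(0, 0, 1)"], clarsimp simp: dot3_def P R) (use cramer2_eq_0[OF 3] in blast)
  qed
qed

definition polar_form :: "(nat \<Rightarrow> nat \<Rightarrow> 'a::comm_ring_1) \<Rightarrow> 'a \<times> 'a \<times> 'a \<Rightarrow> nat \<Rightarrow> nat \<Rightarrow> 'a" where
  "polar_form c D i j = fst D * dX 4 c i j + fst (snd D) * dY 4 c i j + snd (snd D) * dZ 4 c i j"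

lemma polar_eq_polar_form: "polar c S D = form_at 3 (polar_form c D) S"
  by (auto simp: polar_def dot3_def gradient_def form_at_def polar_form_def tform_eval_3
      split: prod.splits) (simp add: algebra_simps)

lemma polar_self: "polar c S S = 4 * form_at 4 c S"
  by (auto simp: polar_def dot3_def gradient_def form_at_def tform_eval_3 tform_eval_4
      dX_def dY_def dZ_def split: prod.splits) (simp add: algebra_simps eval_nat_numeral)

lemma polar_add_scaled: "polar c S (add_scaled P u R) = polar c S P + u * polar c S R"
  by (auto simp: polar_def dot3_def add_scaled_def split: prod.splits) (simp add: algebra_simps)

text \<open>If the quartic vanished on the line through \<open>P\<close> and \<open>R\<close>, the cubic polar in a
  third direction \<open>D\<close> would vanish at some point \<open>S\<close> of that line, and \<open>S\<close> would be singular.\<close>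

lemma restrict_form_nonzero:
  fixes c :: "nat \<Rightarrow> nat \<Rightarrow> 'a::alg_closed_field"
  assumes smooth: "no_singular_point c" and ind: "indep3 P R"
  shows "restrict_form 4 c P R \<noteq> 0"
proof
  assume p0: "restrict_form 4 c P R = 0"
  obtain D where D: "\<And>G. dot3 P G = 0 \<Longrightarrow> dot3 R G = 0 \<Longrightarrow> dot3 D G = 0 \<Longrightarrow> G = (0, 0, 0)"
    using indep3_unit_vector_completion[OF ind] by blast
  have on_line: "form_at 4 c S = 0 \<and> polar c S P = 0 \<and> polar c S R = 0" if S: "S = add_scaled P u R" for S u
  proof -
    have e: "form_at 4 c S = 0" using arg_cong[OF p0, of "\<lambda>q. poly q u"] by (simp add: poly_restrict_form S)
    have "restrict_form 4 c S R = 0" using p0 by (simp add: S restrict_form_add_scaled)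
    hence r: "polar c S R = 0" using coeff_1_restrict_form[of c S R] by simp
    have "polar c S S = 0" using polar_self[of c S] e by simp
    hence "polar c S P = 0" using polar_add_scaled[of c S P u R] r S by simp
    thus ?thesis using e r by simp
  qed
  have at_R: "form_at 4 c R = 0 \<and> polar c R P = 0 \<and> polar c R R = 0"
  proof -
    have e: "form_at 4 c R = 0" using coeff_top_restrict_form[of 4 c P R] p0 by simp
    have "coeff (restrict_form 4 c R P) 1 = 0" using restrict_form_swap_coeff[of 1 4 c R P] p0 by simp
    thus ?thesis using coeff_1_restrict_form[of c R P] polar_self[of c R] e by simp
  qed
  obtain S where S: "S \<noteq> (0, 0, 0)" "form_at 4 c S = 0" "polar c S P = 0" "polar c S R = 0" "polar c S D = 0"
  proof (cases "degree (restrict_form 3 (polar_form c D) P R) = 0")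
    case False
    then obtain u where u: "poly (restrict_form 3 (polar_form c D) P R) u = 0"
      using alg_closed_imp_poly_has_root by blast
    have "add_scaled P u R \<noteq> (0, 0, 0)" using ind indep3_add_scaled_left indep3_nonzero by blast
    with u show ?thesis using on_line[OF refl, of u] that
      by (simp add: poly_restrict_form polar_eq_polar_form)
  next
    case True
    hence "coeff (restrict_form 3 (polar_form c D) P R) 3 = 0" by (simp add: coeff_eq_0)
    hence "polar c R D = 0" by (simp add: coeff_top_restrict_form polar_eq_polar_form)
    thus ?thesis using at_R that indep3_nonzero[OF ind] by blast
  qed
  have "gradient c S = (0, 0, 0)"
    by (rule D) (use S in \<open>simp_all add: polar_def dot3_def split: prod.splits\<close>)
  thus False using smooth S(1,2) unfolding no_singular_point_def by blast
qed

definition contains_no_line :: "(nat \<Rightarrow> nat \<Rightarrow> 'a::comm_ring_1) \<Rightarrow> bool" where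
  "contains_no_line c \<longleftrightarrow> (\<forall>P R. indep3 P R \<longrightarrow> restrict_form 4 c P R \<noteq> 0)"

lemma no_singular_point_imp_contains_no_line:
  fixes c :: "nat \<Rightarrow> nat \<Rightarrow> 'a::alg_closed_field"
  shows "no_singular_point c \<Longrightarrow> contains_no_line c"
  by (simp add: contains_no_line_def restrict_form_nonzero)

section \<open>A bitangent along \<open>x = 0\<close>\<close>

lemma polar_x0_char2:
  fixes c :: "nat \<Rightarrow> nat \<Rightarrow> 'a::comm_ring_1"
  assumes "(2::'a) = 0"
  shows "polar c (0, p2, p3) (0, r2, r3) = (p2 * r3 - p3 * r2) * (c 0 1 * p3^2 + c 0 3 * p2^2)"
  unfolding polar_def dot3_def gradient_def prod.case tform_eval_3 dX_def dY_def dZ_def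
  by (simp add: eval_nat_numeral algebra_simps, simp add: char2_numeral[OF assms] algebra_simps)

lemma char2_binary_quadratic_eq_0:
  fixes a b p2 p3 q2 q3 :: "'a::field"
  assumes two: "(2::'a) = 0" and d: "p2 * q3 - p3 * q2 \<noteq> 0"
    and e1: "a * p3^2 + b * p2^2 = 0" and e2: "a * q3^2 + b * q2^2 = 0"
  shows "a = 0 \<and> b = 0"
proof -
  have sq: "(p2 * q3 - p3 * q2)^2 = p2^2 * q3^2 - p3^2 * q2^2"
    by (simp add: eval_nat_numeral algebra_simps, simp add: char2_numeral[OF two] algebra_simps)
  have "b * (p2^2 * q3^2 - p3^2 * q2^2) = q3^2 * (a * p3^2 + b * p2^2) - p3^2 * (a * q3^2 + b * q2^2)"
    by (simp add: algebra_simps)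
  hence "b * (p2 * q3 - p3 * q2)^2 = 0" using e1 e2 sq by simp
  moreover have "a * (p2^2 * q3^2 - p3^2 * q2^2) = p2^2 * (a * q3^2 + b * q2^2) - q2^2 * (a * p3^2 + b * p2^2)"
    by (simp add: algebra_simps)
  hence "a * (p2 * q3 - p3 * q2)^2 = 0" using e1 e2 sq by simp
  ultimately show ?thesis using d by simp
qed

lemma has_contact_x0:
  fixes c :: "nat \<Rightarrow> nat \<Rightarrow> 'a::alg_closed_field"
  assumes two: "(2::'a) = 0" and "\<kappa> \<noteq> 0" and C: "has_contact c (\<kappa>, 0, 0) P m" and "m \<ge> 2"
  shows "\<exists>p2 p3 r2 r3. P = (0, p2, p3) \<and> p2 * r3 - p3 * r2 \<noteq> 0 \<and> c 0 1 * p3^2 + c 0 3 * p2^2 = 0 \<and>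
           (m \<ge> 4 \<longrightarrow> c 0 1 * r3^2 + c 0 3 * r2^2 = 0)"
proof -
  from C obtain R where R: "on_line (\<kappa>, 0, 0) R" "indep3 P R" "restrict_form 4 c P R \<noteq> 0"
      "m \<le> order 0 (restrict_form 4 c P R)" and oP: "on_line (\<kappa>, 0, 0) P"
    unfolding has_contact_def by blast
  obtain p1 p2 p3 r1 r2 r3 where P': "P = (p1, p2, p3)" and R': "R = (r1, r2, r3)" by (cases P, cases R)
  have "p1 = 0" "r1 = 0" using oP R(1) \<open>\<kappa> \<noteq> 0\<close> by (simp_all add: on_line_def P' R')
  hence P: "P = (0, p2, p3)" and Rr: "R = (0, r2, r3)" using P' R' by simp_all
  have d: "p2 * r3 - p3 * r2 \<noteq> 0" using R(2) by (simp add: indep3_def P Rr)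
  have cz: "\<forall>j<m. coeff (restrict_form 4 c P R) j = 0" using order_0_ge_iff[OF R(3)] R(4) by blast
  have "polar c P R = 0" using cz \<open>m \<ge> 2\<close> coeff_1_restrict_form[of c P R] by auto
  hence "c 0 1 * p3^2 + c 0 3 * p2^2 = 0" using polar_x0_char2[OF two, of c p2 p3 r2 r3] d by (simp add: P Rr)
  moreover have "c 0 1 * r3^2 + c 0 3 * r2^2 = 0" if "m \<ge> 4"
  proof -
    have "polar c R P = 0" using cz coeff_3_restrict_form[of c P R] that by auto
    moreover have "r2 * p3 - r3 * p2 \<noteq> 0" using d by (simp add: algebra_simps)
    ultimately show ?thesis using polar_x0_char2[OF two, of c r2 r3 p2 p3] by (simp add: P Rr)
  qed
  ultimately show ?thesis using d P by blast
qed

lemma is_bitangent_x0_coeffs: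
  fixes c :: "nat \<Rightarrow> nat \<Rightarrow> 'a::alg_closed_field"
  assumes two: "(2::'a) = 0" and k: "\<kappa> \<noteq> 0" and B: "is_bitangent c (\<kappa>, 0, 0)"
  shows "c 0 1 = 0 \<and> c 0 3 = 0"
proof -
  from B consider (two_points) P Q where "has_contact c (\<kappa>, 0, 0) P 2" "has_contact c (\<kappa>, 0, 0) Q 2" "indep3 P Q"
    | (one_point) P where "has_contact c (\<kappa>, 0, 0) P 4" unfolding is_bitangent_def by blast
  thus ?thesis
  proof cases
    case two_points
    obtain p2 p3 where P: "P = (0, p2, p3)" "c 0 1 * p3^2 + c 0 3 * p2^2 = 0"
      using has_contact_x0[OF two k two_points(1)] by auto
    obtain q2 q3 where Q: "Q = (0, q2, q3)" "c 0 1 * q3^2 + c 0 3 * q2^2 = 0"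
      using has_contact_x0[OF two k two_points(2)] by auto
    have "p2 * q3 - p3 * q2 \<noteq> 0" using two_points(3) by (simp add: indep3_def P Q)
    thus ?thesis using char2_binary_quadratic_eq_0[OF two _ P(2) Q(2)] by blast
  next
    case one_point
    obtain p2 p3 r2 r3 where "p2 * r3 - p3 * r2 \<noteq> 0" "c 0 1 * p3^2 + c 0 3 * p2^2 = 0"
        "c 0 1 * r3^2 + c 0 3 * r2^2 = 0"
      using has_contact_x0[OF two k one_point] by auto
    thus ?thesis using char2_binary_quadratic_eq_0[OF two] by blast
  qed
qed

section \<open>Linear changes of coordinates\<close>

definition mat_app :: "(nat \<Rightarrow> nat \<Rightarrow> 'a::comm_ring_1) \<Rightarrow> 'a \<times> 'a \<times> 'a \<Rightarrow> 'a \<times> 'a \<times> 'a" where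
  "mat_app M P = (case P of (x, y, z) \<Rightarrow>
     (M 0 0 * x + M 0 1 * y + M 0 2 * z, M 1 0 * x + M 1 1 * y + M 1 2 * z, M 2 0 * x + M 2 1 * y + M 2 2 * z))"

definition line_pullback :: "(nat \<Rightarrow> nat \<Rightarrow> 'a::comm_ring_1) \<Rightarrow> 'a \<times> 'a \<times> 'a \<Rightarrow> 'a \<times> 'a \<times> 'a" where
  "line_pullback M l = (case l of (a, b, c) \<Rightarrow>
     (a * M 0 0 + b * M 1 0 + c * M 2 0, a * M 0 1 + b * M 1 1 + c * M 2 1, a * M 0 2 + b * M 1 2 + c * M 2 2))"

lemma dot3_mat_app: "dot3 l (mat_app M P) = dot3 (line_pullback M l) P"
  by (auto simp: dot3_def mat_app_def line_pullback_def split: prod.splits) (simp add: algebra_simps)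

lemma dot3_ext: "(\<And>V. dot3 l V = dot3 l' V) \<Longrightarrow> l = l'"
proof -
  assume h: "\<And>V. dot3 l V = dot3 l' V"
  obtain a b c a' b' c' where l: "l = (a, b, c)" and l': "l' = (a', b', c')" by (cases l, cases l')
  show ?thesis using h[of "(1, 0, 0)"] h[of "(0, 1, 0)"] h[of "(0, 0, 1)"] by (simp add: dot3_def l l')
qed

lemma line_pullback_inverse:
  assumes "\<And>V. mat_app N (mat_app M V) = V" shows "line_pullback M (line_pullback N l) = l"
  by (rule dot3_ext) (simp add: dot3_mat_app[symmetric] assms)

lemma line_pullback_scale3: "line_pullback M (scale3 \<mu> l) = scale3 \<mu> (line_pullback M l)"
  by (simp add: line_pullback_def scale3_def algebra_simps split: prod.splits)

lemma mat_app_add_scaled: "mat_app M (add_scaled P t R) = add_scaled (mat_app M P) t (mat_app M R)"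
  by (auto simp: mat_app_def add_scaled_def split: prod.splits) (simp_all add: algebra_simps)

lemma not_indep3_mat_app:
  fixes N :: "nat \<Rightarrow> nat \<Rightarrow> 'a::comm_ring_1"
  assumes "\<not> indep3 A B" shows "\<not> indep3 (mat_app N A) (mat_app N B)"
proof -
  obtain a1 a2 a3 b1 b2 b3 where A: "A = (a1, a2, a3)" and B: "B = (b1, b2, b3)" by (cases A, cases B)
  have z: "a2 * b3 - a3 * b2 = 0" "a3 * b1 - a1 * b3 = 0" "a1 * b2 - a2 * b1 = 0"
    using assms by (auto simp: indep3_def A B)
  \<comment> \<open>Binet--Cauchy: each minor of the images is a combination of the minors of \<open>A, B\<close>.\<close>
  have g: "(u0 * a1 + u1 * a2 + u2 * a3) * (v0 * b1 + v1 * b2 + v2 * b3) -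
             (v0 * a1 + v1 * a2 + v2 * a3) * (u0 * b1 + u1 * b2 + u2 * b3) = 0" for u0 u1 u2 v0 v1 v2 :: 'a
  proof -
    have "(u0 * a1 + u1 * a2 + u2 * a3) * (v0 * b1 + v1 * b2 + v2 * b3) -
             (v0 * a1 + v1 * a2 + v2 * a3) * (u0 * b1 + u1 * b2 + u2 * b3) =
     (u0 * v1 - u1 * v0) * (a1 * b2 - a2 * b1) + (u2 * v0 - u0 * v2) * (a3 * b1 - a1 * b3)
     + (u1 * v2 - u2 * v1) * (a2 * b3 - a3 * b2)"
      by (simp add: algebra_simps)
    thus ?thesis using z by simp
  qed
  show ?thesis unfolding indep3_def mat_app_def A B prod.case
    using g[of "N 1 0" "N 1 1" "N 1 2" "N 2 0" "N 2 1" "N 2 2"]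
          g[of "N 2 0" "N 2 1" "N 2 2" "N 0 0" "N 0 1" "N 0 2"]
          g[of "N 0 0" "N 0 1" "N 0 2" "N 1 0" "N 1 1" "N 1 2"] by simp
qed

lemma restrict_form_mat_app:
  fixes c :: "nat \<Rightarrow> nat \<Rightarrow> 'a::alg_closed_field"
  assumes pullback: "\<And>V. form_at 4 c' V = form_at 4 c (mat_app M V)"
  shows "restrict_form 4 c' P R = restrict_form 4 c (mat_app M P) (mat_app M R)"
  by (rule poly_eqI_alg_closed) (simp add: poly_restrict_form pullback mat_app_add_scaled)

context
  fixes M N :: "nat \<Rightarrow> nat \<Rightarrow> 'a::alg_closed_field"
  assumes inverse: "\<And>V. mat_app N (mat_app M V) = V"
begin

lemma indep3_mat_app: "indep3 P R \<Longrightarrow> indep3 (mat_app M P) (mat_app M R)"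
  using not_indep3_mat_app[of "mat_app M P" "mat_app M R" N] inverse by auto

lemma mat_app_nonzero: "P \<noteq> (0, 0, 0) \<Longrightarrow> mat_app M P \<noteq> (0, 0, 0)"
  using inverse[of P] by (auto simp: mat_app_def)

lemma line_pullback_nonzero: "l \<noteq> (0, 0, 0) \<Longrightarrow> line_pullback N l \<noteq> (0, 0, 0)"
  using line_pullback_inverse[OF inverse, of l] by (auto simp: line_pullback_def)

context
  fixes c c' :: "nat \<Rightarrow> nat \<Rightarrow> 'a"
  assumes pullback: "\<And>V. form_at 4 c' V = form_at 4 c (mat_app M V)"
begin

lemma contains_no_line_pullback: "contains_no_line c \<Longrightarrow> contains_no_line c'"
  unfolding contains_no_line_def restrict_form_mat_app[OF pullback] using indep3_mat_app by blast

lemma has_contact_mat_app: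
  assumes "has_contact c' l P m" shows "has_contact c (line_pullback N l) (mat_app M P) m"
proof -
  have on_line: "on_line (line_pullback N l) (mat_app M Q) \<longleftrightarrow> on_line l Q" for Q
    by (simp add: on_line_iff_dot3 dot3_mat_app[symmetric] inverse)
  from assms obtain R where R: "on_line l R" "indep3 P R" "restrict_form 4 c' P R \<noteq> 0"
      "m \<le> order 0 (restrict_form 4 c' P R)" "on_line l P"
    unfolding has_contact_def by blast
  show ?thesis unfolding has_contact_def
    by (intro conjI exI[of _ "mat_app M R"])
       (use R on_line indep3_mat_app restrict_form_mat_app[OF pullback, of P R] in auto)
qed

lemma is_bitangent_mat_app:
  assumes "is_bitangent c' l" shows "is_bitangent c (line_pullback N l)"
proof (rule is_bitangent_map[where f = "mat_app M", OF assms])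
  show "line_pullback N l \<noteq> (0, 0, 0)" by (rule line_pullback_nonzero[OF is_bitangent_nonzero[OF assms]])
qed (simp_all add: indep3_mat_app mat_app_nonzero has_contact_mat_app)

end
end

lemma unique_bitangent_pullback:
  fixes M N :: "nat \<Rightarrow> nat \<Rightarrow> 'a::alg_closed_field"
  assumes inv1: "\<And>V. mat_app N (mat_app M V) = V" and inv2: "\<And>V. mat_app M (mat_app N V) = V"
    and pullback: "\<And>V. form_at 4 c' V = form_at 4 c (mat_app M V)"
    and U: "unique_bitangent c l"
  shows "unique_bitangent c' (line_pullback M l)"
proof -
  have pushforward: "form_at 4 c V = form_at 4 c' (mat_app N V)" for V
    by (simp add: pullback inv2)
  have "is_bitangent c' (line_pullback M l)"
    using is_bitangent_mat_app[OF inv2 pushforward] U unfolding unique_bitangent_def by blast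
  moreover have "\<exists>\<mu>. l' = scale3 \<mu> (line_pullback M l)" if B: "is_bitangent c' l'" for l'
  proof -
    obtain \<mu> where "line_pullback N l' = scale3 \<mu> l"
      using is_bitangent_mat_app[OF inv1 pullback B] U unfolding unique_bitangent_def by blast
    hence "line_pullback M (line_pullback N l') = scale3 \<mu> (line_pullback M l)"
      by (simp add: line_pullback_scale3)
    hence "l' = scale3 \<mu> (line_pullback M l)" using line_pullback_inverse[OF inv1, of l'] by simp
    thus ?thesis by blast
  qed
  ultimately show ?thesis unfolding unique_bitangent_def by blast
qed

section \<open>Finite fields of characteristic two and the Frobenius map\<close>

lemma finite_field_power_card:
  fixes x :: "'a::{finite, field}"
  shows "x ^ card (UNIV :: 'a set) = x"
proof (cases "x = 0")
  case False
  define R where "R = (ring_of_type_algebra :: 'a ring)"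
  interpret R: field R unfolding R_def by rule
  have pow: "x [^]\<^bsub>R\<^esub> n = x ^ n" for n
    by (induction n) (simp_all add: R_def ring_of_type_algebra_def)
  have units: "Units R = UNIV - {0}"
    by (simp add: R.field_Units) (simp add: R_def ring_of_type_algebra_def)
  have "x [^]\<^bsub>R\<^esub> card (Units R) = \<one>\<^bsub>R\<^esub>"
    by (rule R.units_power_order_eq_one) (use False in \<open>simp_all add: units\<close>)
  hence "x ^ (card (UNIV :: 'a set) - 1) = 1"
    by (simp add: pow units) (simp add: R_def ring_of_type_algebra_def)
  moreover have "card (UNIV :: 'a set) = Suc (card (UNIV :: 'a set) - 1)"
    using finite_UNIV_card_ge_0[where ?'a = 'a] by simp
  ultimately show ?thesis by (metis power_Suc mult_1_right)
qed (use finite_UNIV_card_ge_0[where ?'a = 'a] in auto)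

lemma char2_additive_subgroup_extend:
  fixes G :: "'a::{finite, comm_ring_1} set"
  assumes two: "(2::'a) = 0" and closed: "\<forall>x\<in>G. \<forall>y\<in>G. x + y \<in> G" and a: "a \<notin> G"
  shows "\<forall>x\<in>G \<union> (\<lambda>x. x + a) ` G. \<forall>y\<in>G \<union> (\<lambda>x. x + a) ` G. x + y \<in> G \<union> (\<lambda>x. x + a) ` G"
    and "card (G \<union> (\<lambda>x. x + a) ` G) = 2 * card G"
proof -
  show "\<forall>x\<in>G \<union> (\<lambda>x. x + a) ` G. \<forall>y\<in>G \<union> (\<lambda>x. x + a) ` G. x + y \<in> G \<union> (\<lambda>x. x + a) ` G"
  proof (intro ballI)
    fix x y assume "x \<in> G \<union> (\<lambda>x. x + a) ` G" "y \<in> G \<union> (\<lambda>x. x + a) ` G"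
    then obtain u v where uv: "u \<in> G" "v \<in> G" and "x = u \<or> x = u + a" "y = v \<or> y = v + a" by auto
    moreover have "(u + a) + (v + a) = (u + v) + (a + a)" "u + (v + a) = (u + v) + a" "(u + a) + v = (u + v) + a"
      by (simp_all only: add_ac)
    ultimately have "x + y = u + v \<or> x + y = (u + v) + a" using char2_add_self[OF two, of a] by auto
    moreover have "u + v \<in> G" using closed uv by blast
    ultimately show "x + y \<in> G \<union> (\<lambda>x. x + a) ` G" by auto
  qed
  have "G \<inter> (\<lambda>x. x + a) ` G = {}"
  proof (rule ccontr)
    assume "G \<inter> (\<lambda>x. x + a) ` G \<noteq> {}"
    then obtain x where "x \<in> G" "x + a \<in> G" by auto
    hence "x + (x + a) \<in> G" using closed by blast
    thus False using a by (simp add: add.assoc[symmetric] char2_add_self[OF two])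
  qed
  moreover have "inj_on (\<lambda>x. x + a) G" by (auto simp: inj_on_def)
  ultimately show "card (G \<union> (\<lambda>x. x + a) ` G) = 2 * card G"
    by (simp add: card_Un_disjoint card_image)
qed

lemma card_UNIV_char2:
  assumes two: "(2::'a::{finite, comm_ring_1}) = 0"
  shows "\<exists>r. card (UNIV :: 'a set) = 2 ^ r"
proof -
  define P where "P n \<longleftrightarrow> (\<exists>G :: 'a set. (\<forall>x\<in>G. \<forall>y\<in>G. x + y \<in> G) \<and> card G = 2 ^ n)" for n
  have "P 0" unfolding P_def by (intro exI[of _ "{0}"]) simp
  moreover have "n \<le> card (UNIV :: 'a set)" if "P n" for n
  proof -
    obtain G :: "'a set" where "card G = 2 ^ n" using \<open>P n\<close> by (auto simp: P_def)
    moreover have "n < 2 ^ n" by (rule less_exp)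
    moreover have "card G \<le> card (UNIV :: 'a set)" by (rule card_mono) simp_all
    ultimately show ?thesis by linarith
  qed
  ultimately obtain n where "P n" and max: "\<And>m. P m \<Longrightarrow> m \<le> n"
    using Nat.ex_has_greatest_nat[of P 0 "card (UNIV :: 'a set)"] by blast
  then obtain G :: "'a set" where closed: "\<forall>x\<in>G. \<forall>y\<in>G. x + y \<in> G" and G: "card G = 2 ^ n"
    by (auto simp: P_def)
  have "G = UNIV"
  proof (rule ccontr)
    assume "G \<noteq> UNIV"
    then obtain a where "a \<notin> G" by auto
    hence "P (Suc n)" unfolding P_def
      by (intro exI[of _ "G \<union> (\<lambda>x. x + a) ` G"]) (use char2_additive_subgroup_extend[OF two closed] G in simp)
    thus False using max[of "Suc n"] by simp
  qed
  thus ?thesis using G by blast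
qed

definition frobenius :: "'k::{finite, field} alg_closure \<Rightarrow> 'k alg_closure" where
  "frobenius x = x ^ card (UNIV :: 'k set)"

definition frobenius3 :: "'k::{finite, field} alg_closure \<times> 'k alg_closure \<times> 'k alg_closure
    \<Rightarrow> 'k alg_closure \<times> 'k alg_closure \<times> 'k alg_closure" where
  "frobenius3 P = (case P of (x, y, z) \<Rightarrow> (frobenius x, frobenius y, frobenius z))"

lemma frobenius_eq_0_iff [simp]: "frobenius (x :: 'k::{finite, field} alg_closure) = 0 \<longleftrightarrow> x = 0"
  using finite_UNIV_card_ge_0[where ?'a = 'k] by (simp add: frobenius_def)

lemma frobenius_0 [simp]: "frobenius 0 = 0"
  by simp

lemma frobenius_mult [simp]: "frobenius (x * y) = frobenius x * frobenius y"
  by (simp add: frobenius_def power_mult_distrib)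

lemma frobenius_power [simp]: "frobenius (x ^ n) = frobenius x ^ n"
  by (simp add: frobenius_def power_mult[symmetric] mult.commute)

lemma frobenius_divide [simp]: "frobenius (x / y) = frobenius x / frobenius y"
  by (simp add: frobenius_def power_divide)

lemma frobenius_to_ac [simp]: "frobenius (to_ac a) = to_ac a"
  by (metis finite_field_power_card frobenius_def to_ac_power)

text \<open>The fixed points of the Frobenius are the roots of \<open>X\<^sup>q - X\<close>; the \<open>q\<close> elements of
  \<open>k\<close> are already among them.\<close>

lemma frobenius_fixed_imp_rational:
  assumes "frobenius x = (x :: 'k::{finite, field} alg_closure)" shows "x \<in> range to_ac"
proof (rule ccontr)
  assume nx: "x \<notin> range to_ac"
  define q where "q = card (UNIV :: 'k set)"
  have "card {0::'k, 1} \<le> card (UNIV :: 'k set)" by (rule card_mono) auto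
  hence q2: "q \<ge> 2" unfolding q_def by simp
  define p :: "'k alg_closure poly" where "p = monom 1 q - [:0, 1:]"
  have dp: "degree p = q" unfolding p_def diff_conv_add_uminus
    by (subst degree_add_eq_left) (use q2 in \<open>simp_all add: degree_monom_eq\<close>)
  hence pnz: "p \<noteq> 0" using q2 by auto
  have "poly p y = frobenius y - y" for y
    unfolding p_def frobenius_def q_def by (simp only: poly_diff poly_monom mult_1_left poly_pCons) simp
  hence roots: "poly p y = 0 \<longleftrightarrow> frobenius y = y" for y by simp
  have "insert x (range to_ac) \<subseteq> {y. poly p y = 0}"
    using assms by (auto simp only: roots frobenius_to_ac mem_Collect_eq)
  hence "card (insert x (range (to_ac :: 'k \<Rightarrow> _))) \<le> card {y. poly p y = 0}"
    by (rule card_mono[OF poly_roots_finite[OF pnz]])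
  moreover have "card (insert x (range (to_ac :: 'k \<Rightarrow> _))) = Suc q"
    using nx by (simp add: card_image inj_to_ac q_def)
  moreover have "card {y. poly p y = 0} \<le> q" using card_poly_roots_bound[OF pnz] dp by simp
  ultimately show False by simp
qed

lemma frobenius3_nonzero: "P \<noteq> (0, 0, 0) \<Longrightarrow> frobenius3 P \<noteq> (0, 0, 0 :: 'k::{finite, field} alg_closure)"
  by (auto simp: frobenius3_def split: prod.splits)

context
  assumes char2: "CHAR('k::{finite, field}) = 2"
begin

lemma frobenius_add [simp]: "frobenius (x + y :: 'k alg_closure) = frobenius x + frobenius y"
proof -
  obtain r where "card (UNIV :: 'k set) = 2 ^ r"
    using card_UNIV_char2 two_eq_zero_if_CHAR_2[OF char2] by blast
  hence "card (UNIV :: 'k set) = CHAR('k alg_closure) ^ r" using char2 by simp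
  moreover have "prime CHAR('k alg_closure)" using char2 by simp
  ultimately show ?thesis unfolding frobenius_def by (rule freshmans_dream'[rotated])
qed

lemma frobenius_uminus [simp]: "frobenius (- x :: 'k alg_closure) = - frobenius x"
  using frobenius_add[of x "- x"] by (simp add: eq_neg_iff_add_eq_0 add.commute)

lemma frobenius_diff [simp]: "frobenius (x - y :: 'k alg_closure) = frobenius x - frobenius y"
  using frobenius_add[of x "- y"] by simp

lemma frobenius_sum [simp]: "frobenius (sum f A :: 'k alg_closure) = (\<Sum>i\<in>A. frobenius (f i))"
  by (induct A rule: infinite_finite_induct) simp_all

lemma frobenius_eq_iff [simp]: "frobenius x = frobenius y \<longleftrightarrow> x = (y :: 'k alg_closure)"
  by (metis frobenius_diff frobenius_eq_0_iff right_minus_eq)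

lemma inj_frobenius: "inj (frobenius :: 'k alg_closure \<Rightarrow> _)"
  by (rule injI) simp

lemma poly_map_poly_frobenius:
  "poly (map_poly frobenius p) (frobenius t) = frobenius (poly p (t :: 'k alg_closure))"
  by (induct p) (simp_all add: map_poly_pCons)

lemma frobenius_form_at:
  "frobenius (form_at d (ac_form (F :: nat \<Rightarrow> nat \<Rightarrow> 'k)) V) = form_at d (ac_form F) (frobenius3 V)"
  by (simp add: form_at_def frobenius3_def tform_eval_def ac_form_def split: prod.splits)

lemma restrict_form_frobenius3:
  "restrict_form 4 (ac_form (F :: nat \<Rightarrow> nat \<Rightarrow> 'k)) (frobenius3 P) (frobenius3 R) =
   map_poly frobenius (restrict_form 4 (ac_form F) P R)"
proof (rule poly_eqI_infinite)
  show "infinite (range (frobenius :: 'k alg_closure \<Rightarrow> _))"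
    by (metis finite_imageD inj_frobenius infinite_UNIV_alg_closed_field)
  fix t assume "t \<in> range (frobenius :: 'k alg_closure \<Rightarrow> _)"
  then obtain s where s: "t = frobenius s" by auto
  have "add_scaled (frobenius3 P) (frobenius s) (frobenius3 R) = frobenius3 (add_scaled P s R)"
    by (simp add: add_scaled_def frobenius3_def split: prod.splits)
  thus "poly (restrict_form 4 (ac_form F) (frobenius3 P) (frobenius3 R)) t =
        poly (map_poly frobenius (restrict_form 4 (ac_form F) P R)) t"
    by (simp only: s poly_restrict_form poly_map_poly_frobenius frobenius_form_at)
qed

lemma on_line_frobenius3: "on_line l P \<Longrightarrow> on_line (frobenius3 l) (frobenius3 P :: 'k alg_closure \<times> _ \<times> _)"
  by (auto simp: on_line_def frobenius3_def split: prod.splits simp flip: frobenius_mult frobenius_add)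

lemma indep3_frobenius3: "indep3 P R \<Longrightarrow> indep3 (frobenius3 P) (frobenius3 R :: 'k alg_closure \<times> _ \<times> _)"
  by (auto simp: indep3_def frobenius3_def split: prod.splits simp flip: frobenius_mult frobenius_diff)

lemma has_contact_frobenius3:
  assumes "has_contact (ac_form (F :: nat \<Rightarrow> nat \<Rightarrow> 'k)) l P m"
  shows "has_contact (ac_form F) (frobenius3 l) (frobenius3 P) m"
proof -
  from assms obtain R where R: "on_line l R" "indep3 P R" "restrict_form 4 (ac_form F) P R \<noteq> 0"
      "m \<le> order 0 (restrict_form 4 (ac_form F) P R)" and P: "on_line l P"
    unfolding has_contact_def by blast
  define p where "p = restrict_form 4 (ac_form F) P R"
  have coeff: "coeff (map_poly frobenius p) i = frobenius (coeff p i)" for i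
    by (simp add: coeff_map_poly)
  have nz: "map_poly frobenius p \<noteq> 0"
    using R(3) coeff by (auto simp: p_def poly_eq_iff)
  have "\<forall>k<m. coeff p k = 0" using order_0_ge_iff[OF R(3)] R(4) unfolding p_def by blast
  hence "m \<le> order 0 (map_poly frobenius p)" using order_0_ge_iff[OF nz] coeff by simp
  thus ?thesis unfolding has_contact_def
    by (intro conjI exI[of _ "frobenius3 R"] on_line_frobenius3 indep3_frobenius3 R P)
       (use nz in \<open>simp_all add: restrict_form_frobenius3 p_def\<close>)
qed

lemma is_bitangent_frobenius3:
  assumes "is_bitangent (ac_form (F :: nat \<Rightarrow> nat \<Rightarrow> 'k)) l"
  shows "is_bitangent (ac_form F) (frobenius3 l)"
proof (rule is_bitangent_map[where f = frobenius3, OF assms])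
  show "frobenius3 l \<noteq> (0, 0, 0)" by (rule frobenius3_nonzero[OF is_bitangent_nonzero[OF assms]])
qed (simp_all add: frobenius3_nonzero indep3_frobenius3 has_contact_frobenius3)

text \<open>The unique bitangent is Frobenius-stable as a point of the dual plane; normalising one
  nonzero coordinate to \<open>1\<close> gives Frobenius-fixed, hence \<open>k\<close>-rational, coordinates.\<close>

lemma unique_bitangent_rational:
  assumes "unique_bitangent (ac_form (F :: nat \<Rightarrow> nat \<Rightarrow> 'k)) l"
  shows "\<exists>\<kappa> m1 m2 m3. \<kappa> \<noteq> 0 \<and> (m1, m2, m3) \<noteq> (0, 0, 0) \<and>
           l = (\<kappa> * to_ac m1, \<kappa> * to_ac m2, \<kappa> * to_ac m3)"
proof -
  obtain a b c where l: "l = (a, b, c)" by (cases l)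
  have "l \<noteq> (0, 0, 0)" using assms is_bitangent_nonzero unfolding unique_bitangent_def by blast
  have "is_bitangent (ac_form F) (frobenius3 l)"
    by (intro is_bitangent_frobenius3) (use assms in \<open>simp add: unique_bitangent_def\<close>)
  then obtain \<mu> where "frobenius3 l = scale3 \<mu> l"
    using assms unfolding unique_bitangent_def by blast
  hence fa: "frobenius a = \<mu> * a" and fb: "frobenius b = \<mu> * b" and fc: "frobenius c = \<mu> * c"
    by (simp_all add: frobenius3_def scale3_def l)
  obtain k where k: "k \<noteq> 0" "frobenius k = \<mu> * k" "k = a \<or> k = b \<or> k = c"
    using \<open>l \<noteq> (0, 0, 0)\<close> fa fb fc l by blast
  have "\<mu> \<noteq> 0" using k by auto
  hence rational: "x / k \<in> range to_ac" if "frobenius x = \<mu> * x" for x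
    by (intro frobenius_fixed_imp_rational) (use that k in simp)
  define m1 m2 m3 where "m1 = of_ac (a / k)" and "m2 = of_ac (b / k)" and "m3 = of_ac (c / k)"
  have "to_ac m1 = a / k" "to_ac m2 = b / k" "to_ac m3 = c / k"
    unfolding m1_def m2_def m3_def using rational fa fb fc by (simp_all add: to_ac_of_ac)
  hence "l = (k * to_ac m1, k * to_ac m2, k * to_ac m3)" and "(m1, m2, m3) \<noteq> (0, 0, 0)"
    using k by (auto simp: l)
  thus ?thesis using k(1) by blast
qed

end

section \<open>Forms with coefficients in \<open>k\<close> and \<open>k\<close>-linear changes of coordinates\<close>

inductive k_form :: "nat \<Rightarrow> ('k::field alg_closure \<Rightarrow> 'k alg_closure \<Rightarrow> 'k alg_closure \<Rightarrow> 'k alg_closure) \<Rightarrow> bool"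
  for d where
  k_form_zero: "k_form d (\<lambda>x y z. 0)"
| k_form_monomial: "i + j \<le> d \<Longrightarrow> k_form d (\<lambda>x y z. to_ac a * x ^ i * y ^ j * z ^ (d - i - j))"
| k_form_add: "k_form d f \<Longrightarrow> k_form d g \<Longrightarrow> k_form d (\<lambda>x y z. f x y z + g x y z)"

lemma k_form_cong:
  assumes "k_form d f" "\<And>x y z. f x y z = g x y z" shows "k_form d g"
proof -
  have "f = g" using assms(2) by (intro ext)
  thus ?thesis using assms(1) by simp
qed

lemma tform_eval_ac_form_add:
  "tform_eval d (ac_form (\<lambda>i j. c1 i j + c2 i j)) x y z =
   tform_eval d (ac_form c1) x y z + tform_eval d (ac_form c2) x y z"
  by (simp add: tform_eval_def ac_form_def sum.distrib[symmetric] algebra_simps)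

lemma tform_eval_ac_form_monomial:
  assumes "i + j \<le> d"
  shows "tform_eval d (ac_form (\<lambda>i' j'. if i' = i \<and> j' = j then a else 0)) x y z =
         to_ac a * x ^ i * y ^ j * z ^ (d - i - j)"
proof -
  have "tform_eval d (ac_form (\<lambda>i' j'. if i' = i \<and> j' = j then a else 0)) x y z =
        (\<Sum>i'\<le>d. \<Sum>j'\<le>d - i'. if i' = i \<and> j' = j then to_ac a * x ^ i' * y ^ j' * z ^ (d - i' - j') else 0)"
    unfolding tform_eval_def ac_form_def by (intro sum.cong refl) auto
  also have "\<dots> = (\<Sum>i'\<le>d. if i' = i then to_ac a * x ^ i * y ^ j * z ^ (d - i - j) else 0)"
    by (intro sum.cong refl) (use assms in \<open>auto simp: sum.delta'\<close>)
  also have "\<dots> = to_ac a * x ^ i * y ^ j * z ^ (d - i - j)"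
    using assms by (simp add: sum.delta')
  finally show ?thesis .
qed

lemma k_form_imp_ac_form:
  "k_form d f \<Longrightarrow> \<exists>c :: nat \<Rightarrow> nat \<Rightarrow> 'k::field. \<forall>x y z. f x y z = tform_eval d (ac_form c) x y z"
proof (induction rule: k_form.induct)
  case k_form_zero
  show ?case by (rule exI[of _ "\<lambda>i j. 0"]) (simp add: tform_eval_def ac_form_def)
next
  case (k_form_monomial i j a)
  show ?case
    by (rule exI[of _ "\<lambda>i' j'. if i' = i \<and> j' = j then a else 0"])
       (simp add: tform_eval_ac_form_monomial k_form_monomial)
next
  case (k_form_add f g)
  then obtain c1 c2 where "\<forall>x y z. f x y z = tform_eval d (ac_form c1) x y z"
      "\<forall>x y z. g x y z = tform_eval d (ac_form c2) x y z" by blast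
  thus ?case by (intro exI[of _ "\<lambda>i j. c1 i j + c2 i j"]) (simp add: tform_eval_ac_form_add)
qed

lemma k_form_sum:
  "finite A \<Longrightarrow> (\<And>i. i \<in> A \<Longrightarrow> k_form d (f i)) \<Longrightarrow> k_form d (\<lambda>x y z. \<Sum>i\<in>A. f i x y z)"
proof (induction A rule: finite_induct)
  case empty thus ?case by (simp add: k_form_zero)
next
  case (insert a A)
  have "k_form d (\<lambda>x y z. f a x y z + (\<Sum>i\<in>A. f i x y z))"
    using insert by (intro k_form_add) auto
  thus ?case by (rule k_form_cong) (use insert in simp)
qed

lemma k_form_monomial_mult:
  assumes "i + j \<le> d1" "i' + j' \<le> d2"
  shows "k_form (d1 + d2) (\<lambda>x y z. (to_ac a * x ^ i * y ^ j * z ^ (d1 - i - j)) *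
                                    (to_ac a' * x ^ i' * y ^ j' * z ^ (d2 - i' - j')))"
proof (rule k_form_cong[OF k_form_monomial[of "i + i'" "j + j'" "d1 + d2" "a * a'"]])
  show "i + i' + (j + j') \<le> d1 + d2" using assms by simp
  fix x y z :: "'a alg_closure"
  have "d1 + d2 - (i + i') - (j + j') = (d1 - i - j) + (d2 - i' - j')" using assms by simp
  thus "to_ac (a * a') * x ^ (i + i') * y ^ (j + j') * z ^ (d1 + d2 - (i + i') - (j + j')) =
        (to_ac a * x ^ i * y ^ j * z ^ (d1 - i - j)) * (to_ac a' * x ^ i' * y ^ j' * z ^ (d2 - i' - j'))"
    by (simp add: power_add mult_ac)
qed

lemma k_form_mult: "k_form d1 f \<Longrightarrow> k_form d2 g \<Longrightarrow> k_form (d1 + d2) (\<lambda>x y z. f x y z * g x y z)"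
proof (induction rule: k_form.induct)
  case k_form_zero
  show ?case by (rule k_form_cong[OF k_form.k_form_zero]) simp
next
  case (k_form_monomial i j a)
  from k_form_monomial.prems k_form_monomial.hyps show ?case
  proof (induction rule: k_form.induct)
    case k_form_zero show ?case by (rule k_form_cong[OF k_form.k_form_zero]) simp
  next
    case (k_form_monomial i' j' a')
    show ?case by (rule k_form_monomial_mult) (use k_form_monomial in auto)
  next
    case (k_form_add g1 g2)
    have "k_form (d1 + d2) (\<lambda>x y z. (to_ac a * x ^ i * y ^ j * z ^ (d1 - i - j)) * g1 x y z +
                                    (to_ac a * x ^ i * y ^ j * z ^ (d1 - i - j)) * g2 x y z)"
      using k_form_add by (intro k_form.k_form_add) auto
    thus ?case by (rule k_form_cong) (simp add: algebra_simps)
  qed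
next
  case (k_form_add f1 f2)
  have "k_form (d1 + d2) (\<lambda>x y z. f1 x y z * g x y z + f2 x y z * g x y z)"
    using k_form_add by (intro k_form.k_form_add) auto
  thus ?case by (rule k_form_cong) (simp add: algebra_simps)
qed

lemma k_form_const: "k_form 0 (\<lambda>x y z. to_ac a)"
  by (rule k_form_cong[OF k_form_monomial[of 0 0 0 a]]) simp_all

lemma k_form_linear: "k_form 1 (\<lambda>x y z. to_ac a * x + to_ac b * y + to_ac c * z)"
proof -
  have "k_form 1 (\<lambda>x y z. to_ac a * x ^ 1 * y ^ 0 * z ^ (1 - 1 - 0) + to_ac b * x ^ 0 * y ^ 1 * z ^ (1 - 0 - 1)
                   + to_ac c * x ^ 0 * y ^ 0 * z ^ (1 - 0 - 0))"
    by (intro k_form_add k_form_monomial) simp_all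
  thus ?thesis by (rule k_form_cong) simp
qed

lemma k_form_power: "k_form 1 f \<Longrightarrow> k_form n (\<lambda>x y z. f x y z ^ n)"
proof (induction n)
  case 0
  show ?case by (rule k_form_cong[OF k_form_const[of 1]]) simp
next
  case (Suc n)
  have "k_form (1 + n) (\<lambda>x y z. f x y z * f x y z ^ n)" using Suc by (intro k_form_mult) auto
  thus ?case by simp
qed

definition mat_to_ac :: "(nat \<Rightarrow> nat \<Rightarrow> 'k::field) \<Rightarrow> nat \<Rightarrow> nat \<Rightarrow> 'k alg_closure" where
  "mat_to_ac M i j = to_ac (M i j)"

lemma ac_form_mat_to_ac:
  "\<exists>c' :: nat \<Rightarrow> nat \<Rightarrow> 'k::field.
     \<forall>V. form_at 4 (ac_form c') V = form_at 4 (ac_form c) (mat_app (mat_to_ac M) V)"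
proof -
  define L where "L r x y z = to_ac (M r 0) * x + to_ac (M r 1) * y + to_ac (M r 2) * z" for r x y z
  have "k_form 4 (\<lambda>x y z. ac_form c i j * L 0 x y z ^ i * L 1 x y z ^ j * L 2 x y z ^ (4 - i - j))"
    if "i \<le> 4" "j \<le> 4 - i" for i j
  proof -
    have "k_form (0 + i + j + (4 - i - j))
            (\<lambda>x y z. to_ac (c i j) * L 0 x y z ^ i * L 1 x y z ^ j * L 2 x y z ^ (4 - i - j))"
      unfolding L_def by (intro k_form_mult k_form_const k_form_power k_form_linear)
    moreover have "0 + i + j + (4 - i - j) = 4" using that by simp
    ultimately show ?thesis by (simp add: ac_form_def)
  qed
  hence "k_form 4 (\<lambda>x y z. tform_eval 4 (ac_form c) (L 0 x y z) (L 1 x y z) (L 2 x y z))"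
    unfolding tform_eval_def by (intro k_form_sum) auto
  then obtain c' :: "nat \<Rightarrow> nat \<Rightarrow> 'k" where
    "\<forall>x y z. tform_eval 4 (ac_form c) (L 0 x y z) (L 1 x y z) (L 2 x y z) = tform_eval 4 (ac_form c') x y z"
    using k_form_imp_ac_form by blast
  thus ?thesis by (intro exI[of _ c']) (auto simp: form_at_def mat_app_def mat_to_ac_def L_def)
qed

definition mat3 :: "'a \<Rightarrow> 'a \<Rightarrow> 'a \<Rightarrow> 'a \<Rightarrow> 'a \<Rightarrow> 'a \<Rightarrow> 'a \<Rightarrow> 'a \<Rightarrow> 'a \<Rightarrow> nat \<Rightarrow> nat \<Rightarrow> 'a" where
  "mat3 a b c d e f g h i = (\<lambda>r s. if r = 0 then (if s = 0 then a else if s = 1 then b else c)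
      else if r = 1 then (if s = 0 then d else if s = 1 then e else f)
      else (if s = 0 then g else if s = 1 then h else i))"

lemma mat3_simps [simp]:
  "mat3 a b c d e f g h i 0 0 = a" "mat3 a b c d e f g h i 0 1 = b" "mat3 a b c d e f g h i 0 2 = c"
  "mat3 a b c d e f g h i 1 0 = d" "mat3 a b c d e f g h i 1 1 = e" "mat3 a b c d e f g h i 1 2 = f"
  "mat3 a b c d e f g h i 2 0 = g" "mat3 a b c d e f g h i 2 1 = h" "mat3 a b c d e f g h i 2 2 = i"
  by (simp_all add: mat3_def)

definition mat_mul3 :: "(nat \<Rightarrow> nat \<Rightarrow> 'a::comm_ring_1) \<Rightarrow> (nat \<Rightarrow> nat \<Rightarrow> 'a) \<Rightarrow> nat \<Rightarrow> nat \<Rightarrow> 'a" where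
  "mat_mul3 M N i j = M i 0 * N 0 j + M i 1 * N 1 j + M i 2 * N 2 j"

definition adjugate3 :: "(nat \<Rightarrow> nat \<Rightarrow> 'a::comm_ring_1) \<Rightarrow> nat \<Rightarrow> nat \<Rightarrow> 'a" where
  "adjugate3 M = mat3
     (M 1 1 * M 2 2 - M 1 2 * M 2 1) (M 0 2 * M 2 1 - M 0 1 * M 2 2) (M 0 1 * M 1 2 - M 0 2 * M 1 1)
     (M 1 2 * M 2 0 - M 1 0 * M 2 2) (M 0 0 * M 2 2 - M 0 2 * M 2 0) (M 0 2 * M 1 0 - M 0 0 * M 1 2)
     (M 1 0 * M 2 1 - M 1 1 * M 2 0) (M 0 1 * M 2 0 - M 0 0 * M 2 1) (M 0 0 * M 1 1 - M 0 1 * M 1 0)"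

lemma mat_app_mat_mul3: "mat_app (mat_mul3 M N) V = mat_app M (mat_app N V)"
  by (auto simp: mat_app_def mat_mul3_def split: prod.splits) (simp_all add: algebra_simps)

lemma det3_mat_mul3: "det3 (mat_mul3 M N) = det3 M * det3 N"
  unfolding det3_def mat_mul3_def by (simp add: algebra_simps)

lemma mat_to_ac_mat_mul3: "mat_to_ac (mat_mul3 M N) = mat_mul3 (mat_to_ac M) (mat_to_ac N)"
  by (simp add: mat_mul3_def mat_to_ac_def fun_eq_iff)

lemma det3_mat_to_ac: "det3 (mat_to_ac M) = to_ac (det3 M)"
  by (simp add: det3_def mat_to_ac_def)

lemma mat_app_adjugate3:
  "mat_app (adjugate3 M) (mat_app M V) = scale3 (det3 M) V"
  "mat_app M (mat_app (adjugate3 M) V) = scale3 (det3 M) V"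
proof -
  obtain x y z where V: "V = (x, y, z)" by (cases V)
  show "mat_app (adjugate3 M) (mat_app M V) = scale3 (det3 M) V"
       "mat_app M (mat_app (adjugate3 M) V) = scale3 (det3 M) V"
    unfolding V mat_app_def adjugate3_def det3_def scale3_def prod.case mat3_simps fst_conv snd_conv
    by (simp_all add: algebra_simps)
qed

lemma mat_app_scale3: "mat_app M (scale3 a V) = scale3 a (mat_app M V)"
  by (simp add: mat_app_def scale3_def algebra_simps split: prod.splits)

lemma mat_app_scaled: "mat_app (\<lambda>i j. a * M i j) V = scale3 a (mat_app M V)"
  by (simp add: mat_app_def scale3_def algebra_simps split: prod.splits)

lemma scale3_scale3: "scale3 a (scale3 b V) = scale3 (a * b) V"
  by (simp add: scale3_def mult_ac)

lemma scale3_1: "scale3 1 V = V"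
  by (cases V) (simp add: scale3_def)

lemma mat_app_inverse3:
  fixes M :: "nat \<Rightarrow> nat \<Rightarrow> 'a::field"
  assumes "det3 M \<noteq> 0"
  obtains N where "\<And>V. mat_app N (mat_app M V) = V" "\<And>V. mat_app M (mat_app N V) = V"
proof
  define N where "N = (\<lambda>i j. inverse (det3 M) * adjugate3 M i j)"
  show "mat_app N (mat_app M V) = V" for V
    using assms by (simp add: N_def mat_app_scaled mat_app_adjugate3 scale3_scale3 scale3_1)
  show "mat_app M (mat_app N V) = V" for V
    using assms by (simp add: N_def mat_app_scaled mat_app_scale3 mat_app_adjugate3 scale3_scale3 scale3_1)
qed

lemma line_to_x0:
  fixes m1 m2 m3 :: "'k::field"
  assumes "(m1, m2, m3) \<noteq> (0, 0, 0)"
  obtains M s where "det3 M \<noteq> 0" "s \<noteq> 0" "line_pullback M (m1, m2, m3) = (s, 0, 0)"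
proof -
  consider "m1 \<noteq> 0" | "m1 = 0" "m2 \<noteq> 0" | "m1 = 0" "m2 = 0" "m3 \<noteq> 0" using assms by auto
  thus ?thesis
  proof cases
    case 1
    let ?M = "mat3 1 (-m2/m1) (-m3/m1) 0 1 0 0 0 1"
    have "det3 ?M \<noteq> 0" unfolding det3_def mat3_simps by simp
    moreover have "line_pullback ?M (m1, m2, m3) = (m1, 0, 0)"
      unfolding line_pullback_def prod.case mat3_simps using 1 by simp
    ultimately show ?thesis using that[of ?M m1] 1 by simp
  next
    case 2
    let ?M = "mat3 0 1 0 (1/m2) 0 (-m3/m2) 0 0 1"
    have "det3 ?M \<noteq> 0" unfolding det3_def mat3_simps using 2 by simp
    moreover have "line_pullback ?M (m1, m2, m3) = (1, 0, 0)"
      unfolding line_pullback_def prod.case mat3_simps using 2 by simp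
    ultimately show ?thesis using that[of ?M 1] by simp
  next
    case 3
    let ?M = "mat3 0 1 0 0 0 1 (1/m3) 0 0"
    have "det3 ?M \<noteq> 0" unfolding det3_def mat3_simps using 3 by simp
    moreover have "line_pullback ?M (m1, m2, m3) = (1, 0, 0)"
      unfolding line_pullback_def prod.case mat3_simps using 3 by simp
    ultimately show ?thesis using that[of ?M 1] by simp
  qed
qed

lemma k_isomorphic_iff:
  "k_isomorphic c G \<longleftrightarrow> (\<exists>M s. det3 M \<noteq> 0 \<and> s \<noteq> 0 \<and>
     (\<forall>x y z. form_at 4 (ac_form c) (mat_app (mat_to_ac M) (x, y, z)) = to_ac s * G x y z))"
  by (simp add: k_isomorphic_def form_at_def mat_app_def mat_to_ac_def)

lemma k_isomorphic_trans:
  assumes "k_isomorphic c (\<lambda>x y z. tform_eval 4 (ac_form c') x y z)" and "k_isomorphic c' G"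
  shows "k_isomorphic c G"
proof -
  obtain M s where M: "det3 M \<noteq> 0" "s \<noteq> 0" and cM: "\<And>x y z.
      form_at 4 (ac_form c) (mat_app (mat_to_ac M) (x, y, z)) = to_ac s * tform_eval 4 (ac_form c') x y z"
    using assms(1) unfolding k_isomorphic_iff by blast
  have cM: "form_at 4 (ac_form c) (mat_app (mat_to_ac M) V) = to_ac s * form_at 4 (ac_form c') V" for V
    using cM by (cases V) (simp add: form_at_def)
  obtain M' s' where M': "det3 M' \<noteq> 0" "s' \<noteq> 0"
    and cM': "\<And>x y z. form_at 4 (ac_form c') (mat_app (mat_to_ac M') (x, y, z)) = to_ac s' * G x y z"
    using assms(2) unfolding k_isomorphic_iff by blast
  show ?thesis unfolding k_isomorphic_iff
    by (intro exI[of _ "mat_mul3 M M'"] exI[of _ "s * s'"])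
       (simp add: M M' det3_mat_mul3 mat_to_ac_mat_mul3 mat_app_mat_mul3 cM cM')
qed

section \<open>Quartics with the bitangent \<open>x = 0\<close> in characteristic two\<close>

definition quad_form :: "'a::comm_ring_1 \<Rightarrow> 'a \<Rightarrow> 'a \<Rightarrow> 'a \<Rightarrow> 'a \<Rightarrow> 'a \<Rightarrow> 'a \<Rightarrow> 'a \<Rightarrow> 'a \<Rightarrow> 'a" where
  "quad_form a b c d e f x y z = a * x^2 + b * y^2 + c * z^2 + d * x * y + e * y * z + f * z * x"

definition cq_form :: "'a::comm_ring_1 \<Rightarrow> 'a \<Rightarrow> 'a \<Rightarrow> 'a \<Rightarrow> 'a \<Rightarrow> 'a \<Rightarrow> 'a \<Rightarrow> 'a \<Rightarrow> 'a \<Rightarrow> 'a" where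
  "cq_form a b c d e f x y z = (quad_form a b c d e f x y z)^2 - x * (y^3 + x^2 * z)"

definition x_cubic :: "'a::comm_ring_1 \<Rightarrow> 'a \<Rightarrow> 'a \<Rightarrow> 'a \<Rightarrow> 'a \<Rightarrow> 'a \<Rightarrow> 'a \<Rightarrow> 'a \<Rightarrow> 'a \<Rightarrow> 'a \<Rightarrow> 'a" where
  "x_cubic a1 a2 a3 a4 a5 a6 a7 x y z = a1 * x^3 * y + a2 * x^3 * z + a3 * x^2 * y * z + a4 * x * y^3
      + a5 * x * y^2 * z + a6 * x * y * z^2 + a7 * x * z^3"

lemma CQ_form_eq_cq_form:
  "CQ_form a b c d e f x y z = cq_form (to_ac a) (to_ac b) (to_ac c) (to_ac d) (to_ac e) (to_ac f) x y z"
  by (simp add: CQ_form_def cq_form_def quad_form_def)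

text \<open>Squaring is additive in characteristic two, so the monomials \<open>x\<^sup>4, y\<^sup>4, z\<^sup>4, x\<^sup>2 y\<^sup>2, y\<^sup>2 z\<^sup>2,
  z\<^sup>2 x\<^sup>2\<close> assemble into a square.\<close>

lemma tform_eval_4_char2:
  fixes c :: "nat \<Rightarrow> nat \<Rightarrow> 'a::comm_ring_1"
  assumes two: "(2::'a) = 0" and "c 0 1 = 0" "c 0 3 = 0"
    and "s40^2 = c 4 0" "s04^2 = c 0 4" "s00^2 = c 0 0" "s22^2 = c 2 2" "s02^2 = c 0 2" "s20^2 = c 2 0"
  shows "tform_eval 4 c x y z = (quad_form s40 s04 s00 s22 s02 s20 x y z)^2
     + x_cubic (c 3 1) (c 3 0) (c 2 1) (c 1 3) (c 1 2) (c 1 1) (c 1 0) x y z"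
  using assms(2,3) unfolding tform_eval_4 quad_form_def x_cubic_def assms(4-9)[symmetric]
  by (simp add: eval_nat_numeral algebra_simps, simp add: char2_numeral[OF two] algebra_simps)

context
  fixes c :: "nat \<Rightarrow> nat \<Rightarrow> 'a::alg_closed_field"
  assumes two: "(2::'a) = 0" and c01: "c 0 1 = 0" and c03: "c 0 3 = 0"
begin

lemma polar_c01_c03:
  "polar c (0, 1, \<mu>) (1, 0, t) = c 1 3 + c 1 2 * \<mu> + c 1 1 * \<mu>^2 + c 1 0 * \<mu>^3"
  "polar c (1, 0, t) (0, 1, \<mu>) = c 3 1 + c 2 1 * t + c 1 1 * t^2 + \<mu> * (c 3 0 + c 1 0 * t^2)"
  "polar c (0, 0, 1) (1, t, 0) = c 1 0"
  "polar c (1, t, 0) (0, 0, 1) = c 3 0 + c 2 1 * t + c 1 2 * t^2"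
  using c01 c03 unfolding polar_def dot3_def gradient_def prod.case tform_eval_3 dX_def dY_def dZ_def
  by (simp_all add: eval_nat_numeral algebra_simps, simp_all add: char2_numeral[OF two] algebra_simps)

lemma is_bitangent_line_t_mu_1:
  assumes no_line: "contains_no_line c"
    and "c 1 3 + c 1 2 * \<mu> + c 1 1 * \<mu>^2 + c 1 0 * \<mu>^3 = 0"
    and "c 3 1 + c 2 1 * t + c 1 1 * t^2 + \<mu> * (c 3 0 + c 1 0 * t^2) = 0"
  shows "is_bitangent c (t, \<mu>, 1)"
proof (rule is_bitangentI_char2[OF two, of _ "(0, 1, \<mu>)" "(1, 0, t)"])
  show "on_line (t, \<mu>, 1) (0, 1, \<mu>)" "on_line (t, \<mu>, 1) (1, 0, t)"
    by (simp_all add: on_line_def char2_add_self[OF two])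
  show ind: "indep3 (0, 1, \<mu>) (1, 0, t)" by (simp add: indep3_def)
  show "(t, \<mu>, 1::'a) \<noteq> (0, 0, 0)" by simp
  show "restrict_form 4 c (0, 1, \<mu>) (1, 0, t) \<noteq> 0"
    using no_line ind by (simp add: contains_no_line_def)
qed (simp_all only: polar_c01_c03 assms)

lemma is_bitangent_line_t_1_0:
  assumes no_line: "contains_no_line c"
    and "c 1 0 = 0" and "c 3 0 + c 2 1 * t + c 1 2 * t^2 = 0"
  shows "is_bitangent c (t, 1, 0)"
proof (rule is_bitangentI_char2[OF two, of _ "(0, 0, 1)" "(1, t, 0)"])
  show "on_line (t, 1, 0) (0, 0, 1)" "on_line (t, 1, 0) (1, t, 0)"
    by (simp_all add: on_line_def char2_add_self[OF two])
  show ind: "indep3 (0, 0, 1) (1, t, 0)" by (simp add: indep3_def)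
  show "(t, 1::'a, 0) \<noteq> (0, 0, 0)" by simp
  show "restrict_form 4 c (0, 0, 1) (1, t, 0) \<noteq> 0"
    using no_line ind by (simp add: contains_no_line_def)
qed (simp_all only: polar_c01_c03 assms)

end

text \<open>If \<open>c = 0\<close>, every line through \<open>(0 : 0 : 1)\<close> meets \<open>C_Q\<close> there with multiplicity at least
  two, so this point is singular.\<close>

lemma cq_form_c0_restrict_dvd:
  fixes a b d e f E1 E2 E3 :: "'a::comm_ring_1"
  shows "[:0, 1:]^2 dvd cq_form [:a:] [:b:] 0 [:d:] [:e:] [:f:] [:0, E1:] [:0, E2:] [:1, E3:]"
proof
  have "[:0, E1:] = [:0, 1:] * [:E1:]" "[:0, E2:] = [:0, 1:] * [:E2:]" by simp_all
  thus "cq_form [:a:] [:b:] 0 [:d:] [:e:] [:f:] [:0, E1:] [:0, E2:] [:1, E3:] =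
    [:0, 1:]^2 * ((smult a ([:0, 1:] * [:E1:]^2) + smult b ([:0, 1:] * [:E2:]^2)
       + smult d ([:0, 1:] * [:E1:] * [:E2:]) + smult e ([:E2:] * [:1, E3:]) + smult f ([:1, E3:] * [:E1:]))^2
     - [:0, 1:] * [:E1:] * ([:0, 1:] * [:E2:]^3 + [:E1:]^2 * [:1, E3:]))"
    unfolding cq_form_def quad_form_def by (simp add: algebra_simps power2_eq_square power3_eq_cube)
qed

lemma cq_form_c0_singular:
  fixes C :: "nat \<Rightarrow> nat \<Rightarrow> 'a::alg_closed_field"
  assumes inv1: "\<And>V. mat_app N (mat_app M V) = V" and inv2: "\<And>V. mat_app M (mat_app N V) = V"
    and eq: "\<And>x y z. form_at 4 C (mat_app M (x, y, z)) = s * cq_form a b 0 d e f x y z"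
  shows "\<not> no_singular_point C"
proof -
  define P where "P = mat_app M (0, 0, 1)"
  have P: "P \<noteq> (0, 0, 0)" unfolding P_def by (rule mat_app_nonzero[OF inv1]) simp
  have "coeff (restrict_form 4 C P D) 0 = 0 \<and> coeff (restrict_form 4 C P D) 1 = 0" for D
  proof -
    obtain E1 E2 E3 where E: "mat_app N D = (E1, E2, E3)" by (cases "mat_app N D")
    have "restrict_form 4 C P D =
        smult s (cq_form [:a:] [:b:] 0 [:d:] [:e:] [:f:] [:0, E1:] [:0, E2:] [:1, E3:])"
    proof (rule poly_eqI_alg_closed)
      fix t
      have "add_scaled P t D = mat_app M (add_scaled (0, 0, 1) t (E1, E2, E3))"
        unfolding P_def mat_app_add_scaled E[symmetric] inv2 ..
      thus "poly (restrict_form 4 C P D) t =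
          poly (smult s (cq_form [:a:] [:b:] 0 [:d:] [:e:] [:f:] [:0, E1:] [:0, E2:] [:1, E3:])) t"
        by (simp add: poly_restrict_form eq add_scaled_def cq_form_def quad_form_def algebra_simps)
    qed
    moreover have "monom 1 2 dvd smult s (cq_form [:a:] [:b:] 0 [:d:] [:e:] [:f:] [:0, E1:] [:0, E2:] [:1, E3:])"
      using dvd_smult[OF cq_form_c0_restrict_dvd] by (simp add: monom_altdef)
    ultimately show ?thesis by (simp add: monom_1_dvd_iff')
  qed
  hence "form_at 4 C P = 0" and polar: "polar C P D = 0" for D
    by (simp_all add: coeff_0_restrict_form flip: coeff_1_restrict_form)
  moreover have "gradient C P = (0, 0, 0)"
    using polar[of "(1, 0, 0)"] polar[of "(0, 1, 0)"] polar[of "(0, 0, 1)"]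
    by (auto simp: polar_def dot3_def split: prod.splits)
  ultimately show ?thesis using P unfolding no_singular_point_def by blast
qed

lemma quadratic_has_root:
  fixes A B C :: "'a::alg_closed_field"
  assumes "A \<noteq> 0 \<or> B \<noteq> 0 \<or> C = 0"
  shows "\<exists>x. A * x^2 + B * x + C = 0"
proof (cases "A = 0 \<and> B = 0")
  case True thus ?thesis using assms by auto
next
  case False
  hence "degree [:C, B, A:] > 0" by auto
  then obtain x where "poly [:C, B, A:] x = 0" using alg_closed_imp_poly_has_root by blast
  thus ?thesis by (auto simp: algebra_simps power2_eq_square)
qed

lemma cubic_has_root:
  fixes a0 a1 a2 a3 :: "'a::alg_closed_field"
  assumes "a3 \<noteq> 0"
  shows "\<exists>x. a0 + a1 * x + a2 * x^2 + a3 * x^3 = 0"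
proof -
  have "degree [:a0, a1, a2, a3:] > 0" using assms by auto
  then obtain x where "poly [:a0, a1, a2, a3:] x = 0" using alg_closed_imp_poly_has_root by blast
  thus ?thesis by (auto simp: algebra_simps power2_eq_square power3_eq_cube)
qed

lemma x_cubic_cube_identity:
  fixes a1 a2 a7 m x y z v :: "'a::comm_ring_1"
  assumes two: "(2::'a) = 0" and v: "(a1 + a2 * m) * v = a2 * y + a7 * z"
  shows "x_cubic a1 a2 0 (a7 * m^3) (a7 * m^2) (a7 * m) a7 x v (y + m * v) = a7 * (x * (y^3 + x^2 * z))"
proof -
  have "x_cubic a1 a2 0 (a7 * m^3) (a7 * m^2) (a7 * m) a7 x v (y + m * v) =
        x^3 * ((a1 + a2 * m) * v + a2 * y) + a7 * x * y^3"
    unfolding x_cubic_def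
    by (simp add: eval_nat_numeral algebra_simps, simp add: char2_numeral[OF two] algebra_simps)
  also have "\<dots> = x^3 * (a2 * y + a2 * y + a7 * z) + a7 * x * y^3" by (simp add: v add_ac)
  also have "\<dots> = a7 * (x * (y^3 + x^2 * z))"
    by (simp add: eval_nat_numeral algebra_simps, simp add: char2_numeral[OF two] algebra_simps)
  finally show ?thesis .
qed

lemma x_cubic_linear_identity:
  fixes a1 a2 a4 x y z v :: "'a::comm_ring_1"
  assumes two: "(2::'a) = 0" and v: "a2 * v = a1 * y + a4 * z"
  shows "x_cubic a1 a2 0 a4 0 0 0 x y v = a4 * (x * (y^3 + x^2 * z))"
proof -
  have "x_cubic a1 a2 0 a4 0 0 0 x y v = a1 * x^3 * y + x^3 * (a2 * v) + a4 * x * y^3"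
    unfolding x_cubic_def by (simp add: algebra_simps)
  also have "\<dots> = a4 * (x * (y^3 + x^2 * z))" unfolding v
    by (simp add: eval_nat_numeral algebra_simps, simp add: char2_numeral[OF two] algebra_simps)
  finally show ?thesis .
qed

text \<open>The hypotheses \<open>no_bitangent_1\<close> and \<open>no_bitangent_2\<close> below say that no line
  \<open>t x + \<mu> y + z = 0\<close>, resp.\ \<open>t x + y = 0\<close>, is a bitangent (compare \<open>is_bitangent_line_t_mu_1\<close>
  and \<open>is_bitangent_line_t_1_0\<close>).\<close>

context
  fixes a1 a2 a3 a4 a5 a6 a7 :: "'k::field"
  assumes two_ac: "(2::'k alg_closure) = 0"
    and no_bitangent_1: "\<And>\<mu> t. to_ac a4 + to_ac a5 * \<mu> + to_ac a6 * \<mu>^2 + to_ac a7 * \<mu>^3 = 0 \<Longrightarrow>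
        to_ac a1 + to_ac a3 * t + to_ac a6 * t^2 + \<mu> * (to_ac a2 + to_ac a7 * t^2) \<noteq> 0"
begin

text \<open>Every root \<open>\<nu>\<close> of the cubic makes the quadratic in \<open>t\<close> of \<open>no_bitangent_1\<close> rootless,
  which forces \<open>a6 + a7 \<nu> = 0\<close>; so the cubic has the single root \<open>a6 / a7\<close>.\<close>

lemma x_cubic_coeffs_a7_nonzero:
  assumes a7: "a7 \<noteq> 0"
  shows "\<exists>m. a3 = 0 \<and> a6 = a7 * m \<and> a5 = a7 * m^2 \<and> a4 = a7 * m^3 \<and> a1 + a2 * m \<noteq> 0"
proof -
  have root: "to_ac a6 + to_ac a7 * \<nu> = 0 \<and> to_ac a3 = 0 \<and> to_ac a1 + to_ac a2 * \<nu> \<noteq> 0"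
    if "to_ac a4 + to_ac a5 * \<nu> + to_ac a6 * \<nu>^2 + to_ac a7 * \<nu>^3 = 0" for \<nu>
  proof (rule ccontr)
    assume "\<not> ?thesis"
    then obtain t where "(to_ac a6 + to_ac a7 * \<nu>) * t^2 + to_ac a3 * t + (to_ac a1 + to_ac a2 * \<nu>) = 0"
      using quadratic_has_root by blast
    moreover have "to_ac a1 + to_ac a3 * t + to_ac a6 * t^2 + \<nu> * (to_ac a2 + to_ac a7 * t^2) =
          (to_ac a6 + to_ac a7 * \<nu>) * t^2 + to_ac a3 * t + (to_ac a1 + to_ac a2 * \<nu>)"
      by (simp add: algebra_simps)
    ultimately show False using no_bitangent_1[OF that] by simp
  qed
  define m where "m = a6 / a7"
  obtain \<mu> where r: "to_ac a4 + to_ac a5 * \<mu> + to_ac a6 * \<mu>^2 + to_ac a7 * \<mu>^3 = 0"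
    using cubic_has_root a7 by (metis to_ac_eq_0_iff)
  have "to_ac a6 = to_ac a7 * \<mu>"
    using root[OF r] char2_uminus[OF two_ac] by (metis add_eq_0_iff2)
  hence a6: "a6 = a7 * m" and \<mu>: "\<mu> = to_ac m" using a7 by (simp_all add: m_def field_simps)
  have "to_ac a6 * \<mu>^2 + to_ac a7 * \<mu>^3 = 0"
    by (simp add: a6 \<mu> eval_nat_numeral algebra_simps, simp add: char2_numeral[OF two_ac] algebra_simps)
  moreover have "to_ac a4 + to_ac a5 * \<mu> = (to_ac a4 + to_ac a5 * \<mu> + to_ac a6 * \<mu>^2 + to_ac a7 * \<mu>^3)
      - (to_ac a6 * \<mu>^2 + to_ac a7 * \<mu>^3)" by (simp add: algebra_simps)
  ultimately have "to_ac a4 + to_ac a5 * \<mu> = 0" using r by simp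
  hence "to_ac a4 = to_ac a5 * \<mu>" by (simp add: add_eq_0_iff2 char2_uminus[OF two_ac])
  hence a4: "a4 = a5 * m" by (simp add: \<mu> flip: to_ac_mult)
  obtain \<nu> where "\<nu> ^ 2 = to_ac a5 / to_ac a7" using nth_root_exists[of 2] by (metis zero_less_numeral)
  hence \<nu>: "to_ac a5 = to_ac a7 * \<nu>^2" using a7 by (simp add: field_simps)
  have "to_ac a4 + to_ac a5 * \<nu> + to_ac a6 * \<nu>^2 + to_ac a7 * \<nu>^3 = 0"
    unfolding \<nu> a4 a6 to_ac_mult \<mu>[symmetric] \<nu>
    by (simp add: eval_nat_numeral algebra_simps, simp add: char2_numeral[OF two_ac] algebra_simps)
  hence "to_ac a6 + to_ac a7 * \<nu> = 0" using root by blast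
  hence "\<nu> = \<mu>" using \<open>to_ac a6 = to_ac a7 * \<mu>\<close> a7 char2_uminus[OF two_ac]
    by (metis add_eq_0_iff2 mult_left_cancel to_ac_eq_0_iff)
  hence a5: "a5 = a7 * m^2" using \<nu> by (simp add: \<mu> flip: to_ac_mult to_ac_power)
  have "a1 + a2 * m \<noteq> 0" using root[OF r] by (simp add: \<mu> flip: to_ac_mult to_ac_add)
  moreover have "a3 = 0" using root[OF r] by simp
  ultimately show ?thesis using a4 a5 a6 by (intro exI[of _ m]) (simp add: power2_eq_square power3_eq_cube)
qed

lemma x_cubic_coeffs_a7_zero:
  assumes a7: "a7 = 0" and no_bitangent_2: "\<And>t. to_ac a2 + to_ac a3 * t + to_ac a5 * t^2 \<noteq> 0"
  shows "a3 = 0 \<and> a5 = 0 \<and> a6 = 0 \<and> a2 \<noteq> 0 \<and> a4 \<noteq> 0"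
proof -
  have "to_ac a5 = 0 \<and> to_ac a3 = 0 \<and> to_ac a2 \<noteq> 0"
  proof (rule ccontr)
    assume "\<not> ?thesis"
    then obtain t where "to_ac a5 * t^2 + to_ac a3 * t + to_ac a2 = 0" using quadratic_has_root by blast
    thus False using no_bitangent_2[of t] by (simp add: algebra_simps)
  qed
  hence a5: "a5 = 0" and a3: "a3 = 0" and a2: "a2 \<noteq> 0" by auto
  have a6: "a6 = 0"
  proof (rule ccontr)
    assume "a6 \<noteq> 0"
    obtain \<mu> where "\<mu> ^ 2 = to_ac a4 / to_ac a6" using nth_root_exists[of 2] by (metis zero_less_numeral)
    hence \<mu>: "to_ac a6 * \<mu>^2 = to_ac a4" using \<open>a6 \<noteq> 0\<close> by (simp add: field_simps)
    obtain t where "t ^ 2 = (to_ac a1 + to_ac a2 * \<mu>) / to_ac a6" using nth_root_exists[of 2] by (metis zero_less_numeral)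
    hence t: "to_ac a6 * t^2 = to_ac a1 + to_ac a2 * \<mu>" using \<open>a6 \<noteq> 0\<close> by (simp add: field_simps)
    have "to_ac a4 + to_ac a5 * \<mu> + to_ac a6 * \<mu>^2 + to_ac a7 * \<mu>^3 = 0"
      using \<mu> a5 a7 by (simp add: two_ac)
    moreover have "to_ac a1 + to_ac a3 * t + to_ac a6 * t^2 + \<mu> * (to_ac a2 + to_ac a7 * t^2) = 0"
      using t a3 a7 by (simp add: algebra_simps two_ac)
    ultimately show False using no_bitangent_1 by blast
  qed
  have "a4 \<noteq> 0"
  proof
    assume "a4 = 0"
    have "to_ac a4 + to_ac a5 * (to_ac (a1 / a2)) + to_ac a6 * (to_ac (a1 / a2))^2
        + to_ac a7 * (to_ac (a1 / a2))^3 = 0" using \<open>a4 = 0\<close> a5 a6 a7 by simp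
    moreover have "to_ac a1 + to_ac a3 * 0 + to_ac a6 * 0^2 + to_ac (a1 / a2) * (to_ac a2 + to_ac a7 * 0^2) = 0"
      using a2 a3 a6 a7 by (simp add: two_ac)
    ultimately show False using no_bitangent_1 by blast
  qed
  thus ?thesis using a2 a3 a5 a6 by simp
qed

text \<open>The terms of \<open>x_cubic\<close> not divisible by \<open>x\<^sup>2\<close> are \<open>a7 x (m y + z)\<^sup>3\<close> if \<open>a7 \<noteq> 0\<close>, and \<open>a4 x y\<^sup>3\<close> otherwise.\<close>

lemma x_cubic_normal_form:
  assumes no_bitangent_2: "\<And>t. a7 = 0 \<Longrightarrow> to_ac a2 + to_ac a3 * t + to_ac a5 * t^2 \<noteq> 0"
  obtains s u1 u2 w1 w2 where "s \<noteq> 0"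
    "\<And>x y z. x_cubic (to_ac a1) (to_ac a2) (to_ac a3) (to_ac a4) (to_ac a5) (to_ac a6) (to_ac a7)
        x (to_ac u1 * y + to_ac u2 * z) (to_ac w1 * y + to_ac w2 * z) = to_ac s * (x * (y^3 + x^2 * z))"
    "u1 * w2 - u2 * w1 \<noteq> 0"
proof (cases "a7 = 0")
  case False
  then obtain m where a3: "a3 = 0" and a6: "a6 = a7 * m" and a5: "a5 = a7 * m^2" and a4: "a4 = a7 * m^3"
    and "a1 + a2 * m \<noteq> 0"
    using x_cubic_coeffs_a7_nonzero by blast
  define \<beta> where "\<beta> = a1 + a2 * m"
  have \<beta>: "\<beta> \<noteq> 0" using \<open>a1 + a2 * m \<noteq> 0\<close> by (simp add: \<beta>_def)
  show ?thesis
  proof (rule that[of a7 "a2 / \<beta>" "a7 / \<beta>" "1 + m * (a2 / \<beta>)" "m * (a7 / \<beta>)"])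
    have "a2 / \<beta> * (m * (a7 / \<beta>)) - a7 / \<beta> * (1 + m * (a2 / \<beta>)) = - (a7 / \<beta>)"
      using \<beta> by (simp add: field_simps)
    thus "a2 / \<beta> * (m * (a7 / \<beta>)) - a7 / \<beta> * (1 + m * (a2 / \<beta>)) \<noteq> 0" using \<beta> False by simp
    fix x y z :: "'k alg_closure"
    define v where "v = to_ac (a2 / \<beta>) * y + to_ac (a7 / \<beta>) * z"
    have w: "to_ac (1 + m * (a2 / \<beta>)) * y + to_ac (m * (a7 / \<beta>)) * z = y + to_ac m * v"
      by (simp add: v_def algebra_simps)
    have "to_ac a1 + to_ac a2 * to_ac m = to_ac \<beta>" by (simp add: \<beta>_def)
    hence "(to_ac a1 + to_ac a2 * to_ac m) * v = to_ac a2 * y + to_ac a7 * z"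
      using \<beta> by (simp add: v_def field_simps)
    thus "x_cubic (to_ac a1) (to_ac a2) (to_ac a3) (to_ac a4) (to_ac a5) (to_ac a6) (to_ac a7)
        x (to_ac (a2 / \<beta>) * y + to_ac (a7 / \<beta>) * z) (to_ac (1 + m * (a2 / \<beta>)) * y + to_ac (m * (a7 / \<beta>)) * z)
        = to_ac a7 * (x * (y^3 + x^2 * z))"
      unfolding w unfolding v_def[symmetric] a3 a4 a5 a6 to_ac_mult to_ac_power to_ac_0
      by (rule x_cubic_cube_identity[OF two_ac])
  qed (rule False)
next
  case True
  hence a3: "a3 = 0" and a5: "a5 = 0" and a6: "a6 = 0" and a2: "a2 \<noteq> 0" and a4: "a4 \<noteq> 0"
    using x_cubic_coeffs_a7_zero no_bitangent_2 by auto
  show ?thesis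
  proof (rule that[of a4 1 0 "a1 / a2" "a4 / a2"])
    show "1 * (a4 / a2) - 0 * (a1 / a2) \<noteq> 0" using a2 a4 by simp
    fix x y z :: "'k alg_closure"
    have "to_ac a2 * (to_ac (a1 / a2) * y + to_ac (a4 / a2) * z) = to_ac a1 * y + to_ac a4 * z"
      using a2 by (simp add: field_simps)
    thus "x_cubic (to_ac a1) (to_ac a2) (to_ac a3) (to_ac a4) (to_ac a5) (to_ac a6) (to_ac a7)
        x (to_ac 1 * y + to_ac 0 * z) (to_ac (a1 / a2) * y + to_ac (a4 / a2) * z) = to_ac a4 * (x * (y^3 + x^2 * z))"
      using x_cubic_linear_identity[OF two_ac] by (simp add: a3 a5 a6 True)
  qed (rule a4)
qed

end

lemma finite_field_char2_sqrt:
  assumes "CHAR('k::{finite, field}) = 2"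
  shows "\<exists>b. b ^ 2 = (a :: 'k)"
proof -
  have two: "(2::'k) = 0" by (rule two_eq_zero_if_CHAR_2[OF assms])
  have "inj (\<lambda>x::'k. x ^ 2)"
  proof (rule injI)
    fix x y :: 'k assume "x ^ 2 = y ^ 2"
    moreover have "(x - y) ^ 2 = x ^ 2 - y ^ 2"
      by (simp add: eval_nat_numeral algebra_simps, simp add: char2_numeral[OF two] algebra_simps)
    ultimately have "(x - y) ^ 2 = 0" by simp
    thus "x = y" by simp
  qed
  hence "surj (\<lambda>x::'k. x ^ 2)" using finite_UNIV_inj_surj finite_UNIV by blast
  thus ?thesis by (metis surjD)
qed

lemma ac_form_char2_decomposition:
  fixes c :: "nat \<Rightarrow> nat \<Rightarrow> 'k::{finite, field}"
  assumes char2: "CHAR('k) = 2" and "c 0 1 = 0" "c 0 3 = 0"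
  obtains a b c' d e f where "\<And>x y z. tform_eval 4 (ac_form c) x y z =
     (quad_form (to_ac a) (to_ac b) (to_ac c') (to_ac d) (to_ac e) (to_ac f) x y z)^2
     + x_cubic (to_ac (c 3 1)) (to_ac (c 3 0)) (to_ac (c 2 1)) (to_ac (c 1 3)) (to_ac (c 1 2))
         (to_ac (c 1 1)) (to_ac (c 1 0)) x y z"
proof -
  obtain \<rho> :: "'k \<Rightarrow> 'k" where \<rho>: "\<And>a. \<rho> a ^ 2 = a"
    using finite_field_char2_sqrt[OF char2] by metis
  from tform_eval_4_char2[OF two_eq_zero_alg_closure[OF char2], of "ac_form c" "to_ac (\<rho> (c 4 0))" "to_ac (\<rho> (c 0 4))"
      "to_ac (\<rho> (c 0 0))" "to_ac (\<rho> (c 2 2))" "to_ac (\<rho> (c 0 2))" "to_ac (\<rho> (c 2 0))"]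
  show ?thesis using assms(2,3) by (intro that) (simp add: ac_form_def \<rho> flip: to_ac_power)
qed

lemma quad_form_linear_subst:
  "quad_form a b c d e f x (u1 * y + u2 * z) (w1 * y + w2 * z) =
   quad_form a (b * u1^2 + c * w1^2 + e * u1 * w1) (b * u2^2 + c * w2^2 + e * u2 * w2) (d * u1 + f * w1)
     (2 * b * u1 * u2 + 2 * c * w1 * w2 + e * (u1 * w2 + u2 * w1)) (d * u2 + f * w2) x y z"
  unfolding quad_form_def by (simp add: eval_nat_numeral algebra_simps)

lemma quad_form_scale:
  "quad_form (s * a) (s * b) (s * c) (s * d) (s * e) (s * f) x y z = s * quad_form a b c d e f x y z"
  unfolding quad_form_def by (simp add: algebra_simps)

lemma x_cubic_normal_form_if_bitangent_x0:
  fixes c :: "nat \<Rightarrow> nat \<Rightarrow> 'k::field"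
  assumes char2: "CHAR('k) = 2" and c01: "c 0 1 = 0" and c03: "c 0 3 = 0"
    and no_line: "contains_no_line (ac_form c)"
    and only_x0: "\<And>l. is_bitangent (ac_form c) l \<Longrightarrow> fst (snd l) = 0 \<and> snd (snd l) = 0"
  obtains s u1 u2 w1 w2 where "s \<noteq> 0"
    "\<And>x y z. x_cubic (to_ac (c 3 1)) (to_ac (c 3 0)) (to_ac (c 2 1)) (to_ac (c 1 3)) (to_ac (c 1 2))
        (to_ac (c 1 1)) (to_ac (c 1 0)) x (to_ac u1 * y + to_ac u2 * z) (to_ac w1 * y + to_ac w2 * z)
        = to_ac s * (x * (y^3 + x^2 * z))"
    "u1 * w2 - u2 * w1 \<noteq> 0"
proof -
  have two_ac: "(2::'k alg_closure) = 0" by (rule two_eq_zero_alg_closure[OF char2])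
  have ac01: "ac_form c 0 1 = 0" and ac03: "ac_form c 0 3 = 0" using c01 c03 by (simp_all add: ac_form_def)
  have nb1: "to_ac (c 3 1) + to_ac (c 2 1) * t + to_ac (c 1 1) * t^2 + \<mu> * (to_ac (c 3 0) + to_ac (c 1 0) * t^2) \<noteq> 0"
    if "to_ac (c 1 3) + to_ac (c 1 2) * \<mu> + to_ac (c 1 1) * \<mu>^2 + to_ac (c 1 0) * \<mu>^3 = 0" for \<mu> t
    using that is_bitangent_line_t_mu_1[OF two_ac ac01 ac03 no_line, of \<mu> t] only_x0[of "(t, \<mu>, 1)"]
    by (auto simp: ac_form_def)
  have nb2: "to_ac (c 3 0) + to_ac (c 2 1) * t + to_ac (c 1 2) * t^2 \<noteq> 0" if "c 1 0 = 0" for t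
    using that is_bitangent_line_t_1_0[OF two_ac ac01 ac03 no_line, of t] only_x0[of "(t, 1, 0)"]
    by (auto simp: ac_form_def)
  show ?thesis by (rule x_cubic_normal_form[OF two_ac nb1 nb2 that])
qed

text \<open>The new quadratic form is \<open>Q = S / r\<close> where \<open>r\<^sup>2 = s\<close>.\<close>

lemma k_isomorphic_CQ_form_if_bitangent_x0:
  fixes c :: "nat \<Rightarrow> nat \<Rightarrow> 'k::{finite, field}"
  assumes char2: "CHAR('k) = 2" and c01: "c 0 1 = 0" and c03: "c 0 3 = 0"
    and no_line: "contains_no_line (ac_form c)"
    and only_x0: "\<And>l. is_bitangent (ac_form c) l \<Longrightarrow> fst (snd l) = 0 \<and> snd (snd l) = 0"
  shows "\<exists>a b c' d e f. k_isomorphic c (CQ_form a b c' d e f)"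
proof -
  have two_ac: "(2::'k alg_closure) = 0" by (rule two_eq_zero_alg_closure[OF char2])
  obtain s u1 u2 w1 w2 where s: "s \<noteq> 0"
    and R: "\<And>x y z. x_cubic (to_ac (c 3 1)) (to_ac (c 3 0)) (to_ac (c 2 1)) (to_ac (c 1 3)) (to_ac (c 1 2))
        (to_ac (c 1 1)) (to_ac (c 1 0)) x (to_ac u1 * y + to_ac u2 * z) (to_ac w1 * y + to_ac w2 * z)
        = to_ac s * (x * (y^3 + x^2 * z))"
    and det: "u1 * w2 - u2 * w1 \<noteq> 0"
    using x_cubic_normal_form_if_bitangent_x0[OF assms] by blast
  obtain r where r: "r ^ 2 = s" using finite_field_char2_sqrt[OF char2] by blast
  hence "r \<noteq> 0" using s by auto
  obtain a b c' d e f where S: "\<And>x y z. tform_eval 4 (ac_form c) x y z =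
     (quad_form (to_ac a) (to_ac b) (to_ac c') (to_ac d) (to_ac e) (to_ac f) x y z)^2
     + x_cubic (to_ac (c 3 1)) (to_ac (c 3 0)) (to_ac (c 2 1)) (to_ac (c 1 3)) (to_ac (c 1 2))
         (to_ac (c 1 1)) (to_ac (c 1 0)) x y z"
    using ac_form_char2_decomposition[of c, OF char2 c01 c03] by blast
  define Q where "Q = quad_form (to_ac (a / r)) (to_ac ((b * u1^2 + c' * w1^2 + e * u1 * w1) / r))
     (to_ac ((b * u2^2 + c' * w2^2 + e * u2 * w2) / r)) (to_ac ((d * u1 + f * w1) / r))
     (to_ac ((2 * b * u1 * u2 + 2 * c' * w1 * w2 + e * (u1 * w2 + u2 * w1)) / r)) (to_ac ((d * u2 + f * w2) / r))"
  have "form_at 4 (ac_form c) (mat_app (mat_to_ac (mat3 1 0 0 0 u1 u2 0 w1 w2)) (x, y, z)) =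
        to_ac s * ((Q x y z)^2 - x * (y^3 + x^2 * z))" for x y z
  proof -
    have "mat_app (mat_to_ac (mat3 1 0 0 0 u1 u2 0 w1 w2)) (x, y, z) =
        (x, to_ac u1 * y + to_ac u2 * z, to_ac w1 * y + to_ac w2 * z)"
      unfolding mat_app_def mat_to_ac_def prod.case mat3_simps by simp
    hence "form_at 4 (ac_form c) (mat_app (mat_to_ac (mat3 1 0 0 0 u1 u2 0 w1 w2)) (x, y, z)) =
        tform_eval 4 (ac_form c) x (to_ac u1 * y + to_ac u2 * z) (to_ac w1 * y + to_ac w2 * z)"
      by (simp only: form_at_def prod.case)
    also have "quad_form (to_ac a) (to_ac b) (to_ac c') (to_ac d) (to_ac e) (to_ac f)
        x (to_ac u1 * y + to_ac u2 * z) (to_ac w1 * y + to_ac w2 * z) = to_ac r * Q x y z"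
      using \<open>r \<noteq> 0\<close> by (simp add: Q_def quad_form_linear_subst flip: quad_form_scale)
    hence "tform_eval 4 (ac_form c) x (to_ac u1 * y + to_ac u2 * z) (to_ac w1 * y + to_ac w2 * z) =
        (to_ac r * Q x y z)^2 + to_ac s * (x * (y^3 + x^2 * z))"
      unfolding S R by simp
    also have "\<dots> = to_ac s * ((Q x y z)^2 - x * (y^3 + x^2 * z))"
      by (simp add: power_mult_distrib r char2_uminus[OF two_ac] algebra_simps flip: to_ac_power,
          simp add: two_ac)
    finally show ?thesis .
  qed
  moreover have "det3 (mat3 1 0 0 0 u1 u2 0 w1 w2) \<noteq> 0" using det by (simp add: det3_def mat3_def)
  ultimately have "k_isomorphic c (CQ_form (a / r) ((b * u1^2 + c' * w1^2 + e * u1 * w1) / r)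
     ((b * u2^2 + c' * w2^2 + e * u2 * w2) / r) ((d * u1 + f * w1) / r)
     ((2 * b * u1 * u2 + 2 * c' * w1 * w2 + e * (u1 * w2 + u2 * w1)) / r) ((d * u2 + f * w2) / r))"
    unfolding k_isomorphic_iff using s by (intro exI[of _ "mat3 1 0 0 0 u1 u2 0 w1 w2"] exI[of _ s])
      (simp add: CQ_form_eq_cq_form cq_form_def Q_def)
  thus ?thesis by blast
qed

lemma CQ_form_c_nonzero:
  fixes F :: "nat \<Rightarrow> nat \<Rightarrow> 'k::field"
  assumes "no_singular_point (ac_form F)" and "k_isomorphic F (CQ_form a b c d e f)"
  shows "c \<noteq> 0"
proof
  assume "c = 0"
  obtain M s where M: "det3 M \<noteq> 0" and eq: "\<And>x y z.
      form_at 4 (ac_form F) (mat_app (mat_to_ac M) (x, y, z)) = to_ac s * CQ_form a b c d e f x y z"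
    using assms(2) unfolding k_isomorphic_iff by blast
  obtain N where "\<And>V. mat_app N (mat_app (mat_to_ac M) V) = V" "\<And>V. mat_app (mat_to_ac M) (mat_app N V) = V"
    using mat_app_inverse3[of "mat_to_ac M"] M by (auto simp: det3_mat_to_ac)
  from cq_form_c0_singular[OF this] show False
    using assms(1) eq by (simp add: CQ_form_eq_cq_form \<open>c = 0\<close>)
qed

lemma unique_bitangent_to_x0:
  fixes F :: "nat \<Rightarrow> nat \<Rightarrow> 'k::{finite, field}"
  assumes char2: "CHAR('k) = 2" and smooth: "no_singular_point (ac_form F)"
    and U: "unique_bitangent (ac_form F) l"
  obtains c where "k_isomorphic F (\<lambda>x y z. tform_eval 4 (ac_form c) x y z)"
    "contains_no_line (ac_form c)" "\<And>l. is_bitangent (ac_form c) l \<Longrightarrow> fst (snd l) = 0 \<and> snd (snd l) = 0"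
    "c 0 1 = 0" "c 0 3 = 0"
proof -
  obtain \<kappa> m1 m2 m3 where "\<kappa> \<noteq> 0" "(m1, m2, m3) \<noteq> (0, 0, 0)"
    and l: "l = (\<kappa> * to_ac m1, \<kappa> * to_ac m2, \<kappa> * to_ac m3)"
    using unique_bitangent_rational[OF char2 U] by blast
  obtain M s where M: "det3 M \<noteq> 0" "s \<noteq> 0" and Ml: "line_pullback M (m1, m2, m3) = (s, 0, 0)"
    using line_to_x0[OF \<open>(m1, m2, m3) \<noteq> (0, 0, 0)\<close>] by blast
  obtain N where inv: "\<And>V. mat_app N (mat_app (mat_to_ac M) V) = V"
      "\<And>V. mat_app (mat_to_ac M) (mat_app N V) = V"
    using mat_app_inverse3[of "mat_to_ac M"] M by (auto simp: det3_mat_to_ac)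
  obtain c where c: "\<And>V. form_at 4 (ac_form c) V = form_at 4 (ac_form F) (mat_app (mat_to_ac M) V)"
    using ac_form_mat_to_ac by blast
  have "line_pullback (mat_to_ac M) (to_ac m1, to_ac m2, to_ac m3) = (to_ac s, 0, 0)"
    using Ml by (simp add: line_pullback_def mat_to_ac_def flip: to_ac_mult to_ac_add)
  moreover have "l = scale3 \<kappa> (to_ac m1, to_ac m2, to_ac m3)" by (simp add: l scale3_def)
  ultimately have "line_pullback (mat_to_ac M) l = scale3 \<kappa> (to_ac s, 0, 0)"
    by (simp add: line_pullback_scale3)
  hence Uc: "unique_bitangent (ac_form c) (scale3 \<kappa> (to_ac s, 0, 0))"
    using unique_bitangent_pullback[OF inv c U] by simp
  show ?thesis
  proof (rule that)
    have "form_at 4 (ac_form F) (mat_app (mat_to_ac M) (x, y, z)) = to_ac 1 * tform_eval 4 (ac_form c) x y z"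
      for x y z by (simp only: c[symmetric]) (simp add: form_at_def)
    thus "k_isomorphic F (\<lambda>x y z. tform_eval 4 (ac_form c) x y z)"
      unfolding k_isomorphic_iff using M(1) by (intro exI[of _ M] exI[of _ "1::'k"]) simp
    show "contains_no_line (ac_form c)"
      using contains_no_line_pullback[OF inv(1) c] no_singular_point_imp_contains_no_line[OF smooth] .
    show "fst (snd l') = 0 \<and> snd (snd l') = 0" if B: "is_bitangent (ac_form c) l'" for l'
    proof -
      obtain \<mu> where "l' = scale3 \<mu> (scale3 \<kappa> (to_ac s, 0, 0))"
        using Uc B unfolding unique_bitangent_def by blast
      thus ?thesis by (simp add: scale3_def)
    qed
    have "is_bitangent (ac_form c) (\<kappa> * to_ac s, 0, 0)" using Uc by (simp add: unique_bitangent_def scale3_def)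
    hence "ac_form c 0 1 = 0 \<and> ac_form c 0 3 = 0"
      by (rule is_bitangent_x0_coeffs[OF two_eq_zero_alg_closure[OF char2], rotated]) (use \<open>\<kappa> \<noteq> 0\<close> M(2) in simp)
    thus "c 0 1 = 0" "c 0 3 = 0" by (simp_all add: ac_form_def)
  qed
qed

theorem proposition2p4:
  fixes F :: "nat \<Rightarrow> nat \<Rightarrow> 'k::{finite, field}"
  assumes "CHAR('k) = 2"
    and "nonsingular_quartic F"
    and "exactly_one_bitangent F"
  shows "\<exists>a b c d e f :: 'k. c \<noteq> 0 \<and> k_isomorphic F (CQ_form a b c d e f)"
proof -
  have smooth: "no_singular_point (ac_form F)"
    using assms(2) by (rule nonsingular_quartic_imp_no_singular_point)
  obtain l where "unique_bitangent (ac_form F) l" using assms(3) exactly_one_bitangent_iff by blast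
  then obtain c where Fc: "k_isomorphic F (\<lambda>x y z. tform_eval 4 (ac_form c) x y z)"
    and "contains_no_line (ac_form c)" "\<And>l. is_bitangent (ac_form c) l \<Longrightarrow> fst (snd l) = 0 \<and> snd (snd l) = 0"
    and "c 0 1 = 0" "c 0 3 = 0"
    using unique_bitangent_to_x0[OF assms(1) smooth] by blast
  then obtain a b c' d e f where "k_isomorphic c (CQ_form a b c' d e f)"
    using k_isomorphic_CQ_form_if_bitangent_x0[OF assms(1)] by blast
  hence "k_isomorphic F (CQ_form a b c' d e f)" by (rule k_isomorphic_trans[OF Fc])
  moreover have "c' \<noteq> 0" using CQ_form_c_nonzero[OF smooth] calculation .
  ultimately show ?thesis by blast
qed

end
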